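(* Let $k$ be a positive integer, $\mathfrak A$ a finite structure with domain $A$ of size $n$, $\vec x_1,\vec x_2$ tuples of variables of length $m$, and $\mathbb X\colon X\to\mathbb R_{\ge0}$ a weighted team whose variable domain contains the variables of $\vec x_1,\vec x_2$ but none of the fresh variables $\vec u=(u_1,\dots,u_m)$, $v_1,v_2$, $\vec z_0=(z_{0,1},\dots,z_{0,k})$, $\vec z=(z_1,\dots,z_k)$. Let $y$ be a variable of $\vec u$ and $\vec y$ the $k$-tuple $(y,\dots,y)$, and define $$\psi^k(\vec x_1,\vec x_2):=\forall\vec u\,\exists v_1v_2\,\forall\vec z_0\,\exists\vec z\,\big((\vec x_1=\vec u\leftrightarrow v_1=y)\wedge(\vec x_2=\vec u\leftrightarrow v_2=y)\wedge(\vec z_0=\vec y\to\vec z=\vec y)\wedge(\neg\,\vec z=\vec y\vee\vec u v_1\approx\vec u v_2)\big).$$ (i) If $\mathfrak A\models^w_{\mathbb X}\vec x_1\subseteq\vec x_2\wedge\vec x_2\subseteq\vec x_1$, $|\mathbb X_{\vec x_1=\vec x_2}|=0$, and $\mathbb X(s)\ge|\mathbb X|/n^k$ for all $s\in\mathrm{supp}(\mathbb X)$, then $\mathfrak A\models^w_{\mathbb X}\psi^k(\vec x_1,\vec x_2)$. (ii) If $\mathfrak A\models^w_{\mathbb X}\psi^k(\vec x_1,\vec x_2)$, then $\mathfrak A\models^w_{\mathbb X}\vec x_1\subseteq\vec x_2\wedge\vec x_2\subseteq\vec x_1$.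
   Context: Teams. A team $X$ is a finite set of assignments $s\colon D\to A$ for a finite set $D$ of first-order variables (its variable domain). A weighted team is any function $\mathbb X\colon X\to\mathbb R_{\ge0}$. Write $\mathrm{supp}(\mathbb X)=\{s:\mathbb X(s)>0\}$, $|\mathbb X|=\sum_s\mathbb X(s)$, and for a first-order formula $\alpha$, $\mathbb X_\alpha$ is the restriction of $\mathbb X$ to assignments satisfying $\alpha$; e.g. $|\mathbb X_{\vec x=\vec a}|$ is the total weight of assignments mapping $\vec x$ to $\vec a$. Sums of teams are pointwise. The marginal of $\mathbb X$ on a variable set $V$ is $s\mapsto\sum_{t\upharpoonright V=s}\mathbb X(t)$. For a variable $x$ and finite set $A$, $\mathbb X[A/x]$ is the team on all assignments $s$ over $\mathrm{Dom}(\mathbb X)\cup\{x\}$ with $s(x)\in A$ whose restriction to $\mathrm{Dom}(\mathbb X)\setminus\{x\}$ lies in the support of the marginal $\mathbb X'$ of $\mathbb X$ on $\mathrm{Dom}(\mathbb X)\setminus\{x\}$, given by $s\mapsto\mathbb X'(s\upharpoonright(\mathrm{Dom}(\mathbb X)\setminus\{x\}))/|A|$. Weighted semantics. Formulae are in negation normal form; for first-order $\alpha$, $\alpha^\bot$ is the negation normal form of $\neg\alpha$, $\alpha\to\psi$ abbreviates $\alpha^\bot\vee(\alpha\wedge\psi)$, $\alpha\leftrightarrow\beta$ (for first-order $\alpha,\beta$) abbreviates $(\alpha\wedge\beta)\vee(\alpha^\bot\wedge\beta^\bot)$, and $\vec x=\vec u$ abbreviates the conjunction of the componentwise equalities. For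 a structure $\mathfrak A$ with domain $A$ and weighted team $\mathbb X$: $\mathfrak A\models^w_{\mathbb X}l$ for a first-order literal $l$ iff $\mathfrak A\models_s l$ for all $s\in\mathrm{supp}(\mathbb X)$; $\wedge$ is conjunction of the conditions; $\mathfrak A\models^w_{\mathbb X}\psi\vee\theta$ iff $\mathbb X=\mathbb Y+\mathbb Z$ for weighted teams $\mathbb Y,\mathbb Z$ with $\mathfrak A\models^w_{\mathbb Y}\psi$ and $\mathfrak A\models^w_{\mathbb Z}\theta$; $\mathfrak A\models^w_{\mathbb X}\forall x\psi$ iff $\mathfrak A\models^w_{\mathbb X[A/x]}\psi$; $\mathfrak A\models^w_{\mathbb X}\exists x\psi$ iff $\mathfrak A\models^w_{\mathbb Y}\psi$ for some weighted team $\mathbb Y$ over $\mathrm{Dom}(\mathbb X)\cup\{x\}$ with $x$-values in $A$ whose marginal on $\mathrm{Dom}(\mathbb X)\setminus\{x\}$ equals that of $\mathbb X$. Atoms: marginal identity $\vec x\approx\vec y$ ($\vec x,\vec y$ of equal length $k$) holds iff $|\mathbb X_{\vec x=\vec a}|=|\mathbb X_{\vec y=\vec a}|$ for all $\vec a\in A^k$; inclusion $\vec x\subseteq\vec y$ holds iff for every $s\in\mathrm{supp}(\mathbb X)$ there is $s'\in\mathrm{supp}(\mathbb X)$ with $s(\vec x)=s'(\vec y)$. *)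

theory Defs
  imports Complex_Main
begin

text \<open>Formulae in negation normal form. Since the formula of the theorem uses no
non-logical symbols, first-order literals are equalities and inequalities of variables.
Assignments are partial maps from variables to values; a weighted team is given by
its variable domain D and a weight function on assignments.\<close>

datatype 'v fml =
    Eq 'v 'v
  | Neq 'v 'v
  | And "'v fml" "'v fml"
  | Or "'v fml" "'v fml"
  | All 'v "'v fml"
  | Ex 'v "'v fml"
  | MargId "'v list" "'v list"
  | Incl "'v list" "'v list"

fun fo_neg :: "'v fml \<Rightarrow> 'v fml" where
  "fo_neg (Eq x y) = Neq x y"
| "fo_neg (Neq x y) = Eq x y"
| "fo_neg (And a b) = Or (fo_neg a) (fo_neg b)"
| "fo_neg (Or a b) = And (fo_neg a) (fo_neg b)"
| "fo_neg (All x a) = Ex x (fo_neg a)"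
| "fo_neg (Ex x a) = All x (fo_neg a)"
| "fo_neg (MargId xs ys) = MargId xs ys"
| "fo_neg (Incl xs ys) = Incl xs ys"

definition imp :: "'v fml \<Rightarrow> 'v fml \<Rightarrow> 'v fml" where
  "imp a p = Or (fo_neg a) (And a p)"

definition iff :: "'v fml \<Rightarrow> 'v fml \<Rightarrow> 'v fml" where
  "iff a b = Or (And a b) (And (fo_neg a) (fo_neg b))"

fun eqs :: "'v list \<Rightarrow> 'v list \<Rightarrow> 'v fml" where
  "eqs [x] [y] = Eq x y"
| "eqs (x # xs) (y # ys) = And (Eq x y) (eqs xs ys)"
| "eqs _ _ = Eq undefined undefined"

definition Alls :: "'v list \<Rightarrow> 'v fml \<Rightarrow> 'v fml" where
  "Alls xs p = foldr All xs p"

definition Exs :: "'v list \<Rightarrow> 'v fml \<Rightarrow> 'v fml" where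
  "Exs xs p = foldr Ex xs p"

type_synonym ('v, 'a) assign = "'v \<rightharpoonup> 'a"

definition wteam :: "'a set \<Rightarrow> 'v set \<Rightarrow> (('v,'a) assign \<Rightarrow> real) \<Rightarrow> bool" where
  "wteam A D w \<longleftrightarrow> (\<forall>s. w s \<ge> 0) \<and> finite {s. w s \<noteq> 0}
      \<and> (\<forall>s. w s \<noteq> 0 \<longrightarrow> dom s = D \<and> ran s \<subseteq> A)"

text \<open>Total weight of the assignments satisfying P, i.e. the size of the restriction.\<close>
definition tw :: "(('v,'a) assign \<Rightarrow> real) \<Rightarrow> (('v,'a) assign \<Rightarrow> bool) \<Rightarrow> real" where
  "tw w P = (\<Sum>s\<in>{s. w s \<noteq> 0 \<and> P s}. w s)"

definition size_wt :: "(('v,'a) assign \<Rightarrow> real) \<Rightarrow> real" where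
  "size_wt w = tw w (\<lambda>_. True)"

definition marg :: "(('v,'a) assign \<Rightarrow> real) \<Rightarrow> 'v set \<Rightarrow> ('v,'a) assign \<Rightarrow> real" where
  "marg w V t = tw w (\<lambda>s. s |` V = t)"

definition dup :: "'a set \<Rightarrow> 'v set \<Rightarrow> (('v,'a) assign \<Rightarrow> real) \<Rightarrow> 'v
                   \<Rightarrow> ('v,'a) assign \<Rightarrow> real" where
  "dup A D w x s = (if dom s = insert x D \<and> s x \<in> Some ` A
                       \<and> marg w (D - {x}) (s |` (D - {x})) > 0
                    then marg w (D - {x}) (s |` (D - {x})) / real (card A) else 0)"

fun sat :: "'a set \<Rightarrow> 'v set \<Rightarrow> (('v,'a) assign \<Rightarrow> real) \<Rightarrow> 'v fml \<Rightarrow> bool" where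
  "sat A D w (Eq x y) = (\<forall>s. w s > 0 \<longrightarrow> s x = s y)"
| "sat A D w (Neq x y) = (\<forall>s. w s > 0 \<longrightarrow> s x \<noteq> s y)"
| "sat A D w (And p q) = (sat A D w p \<and> sat A D w q)"
| "sat A D w (Or p q) = (\<exists>w1 w2. wteam A D w1 \<and> wteam A D w2 \<and>
        (\<forall>s. w s = w1 s + w2 s) \<and> sat A D w1 p \<and> sat A D w2 q)"
| "sat A D w (All x p) = sat A (insert x D) (dup A D w x) p"
| "sat A D w (Ex x p) = (\<exists>w'. wteam A (insert x D) w' \<and>
        (\<forall>t. marg w' (D - {x}) t = marg w (D - {x}) t) \<and> sat A (insert x D) w' p)"
| "sat A D w (MargId xs ys) = (\<forall>as. length as = length xs \<and> set as \<subseteq> A \<longrightarrow>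
        tw w (\<lambda>s. map s xs = map Some as) = tw w (\<lambda>s. map s ys = map Some as))"
| "sat A D w (Incl xs ys) = (\<forall>s. w s > 0 \<longrightarrow> (\<exists>s'. w s' > 0 \<and> map s xs = map s' ys))"

definition psi :: "'v list \<Rightarrow> 'v list \<Rightarrow> 'v list \<Rightarrow> 'v \<Rightarrow> 'v \<Rightarrow> 'v list \<Rightarrow> 'v list
                   \<Rightarrow> 'v \<Rightarrow> 'v fml" where
  "psi x1 x2 u v1 v2 z0 z y =
     (let ys = replicate (length z) y in
      Alls u (Ex v1 (Ex v2 (Alls z0 (Exs z
        (And (iff (eqs x1 u) (Eq v1 y))
         (And (iff (eqs x2 u) (Eq v2 y))
          (And (imp (eqs z0 ys) (eqs z ys))
               (Or (fo_neg (eqs z ys)) (MargId (u @ [v1]) (u @ [v2])))))))))))"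

end

theory Submission
  imports Defs
begin

text \<open>
  Universally quantifying a block of fresh variables replaces a team by its uniform
  extension, existentially quantifying it means passing to any extension with the same
  marginal.

  If psi holds, take s in the support, let u take the values of x1 under s and let z0 be
  constantly y. Then the matrix forces z = y...y, so the extension lies in the disjunct
  satisfying u v1 \<approx> u v2, and v1 = y there. The marginal identity provides an assignment
  with the same u and v2 = y, i.e. x2 = u; its restriction to the original variables
  witnesses the inclusion.

  Conversely, choose v_i = y exactly where x_i = u (if |A| = 1 the team is empty, as x1 = x2
  everywhere) and z = y...y exactly where z0 = y...y. On a slice u = a let P and Q be the
  weights of the assignments with x1 = a and with x2 = a (disjoint sets). Keeping the
  fractions min(P,Q)/P and min(P,Q)/Q of them in the marginal-identity disjunct gives
  v1 = y and v2 = y the same weight min(P,Q) on every slice. This disjunct must contain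
  all extensions with z0 = y...y, which carry the fraction 1/|A|^k, so the construction needs
  min(P,Q) \<ge> P/|A|^k; this follows from the mutual inclusion and the lower bound
  |X|/|A|^k on the weights.
\<close>

section \<open>Assignments and finite sums\<close>

lemma restrict_map_eq_self: "dom s \<subseteq> D \<Longrightarrow> s |` D = s"
  by (rule ext) (metis domIff restrict_in restrict_out subsetD)

lemma restrict_map_add_left: "dom r \<subseteq> D \<Longrightarrow> dom g \<inter> D = {} \<Longrightarrow> (r ++ g) |` D = r"
  by (rule ext) (metis disjoint_iff domIff map_add_dom_app_simps(3) restrict_in restrict_out subsetD)

lemma map_add_restrict_split: "dom r \<subseteq> D \<union> U \<Longrightarrow> r |` D ++ r |` U = r"
  by (rule ext) (metis UnE domIff map_add_None map_add_dom_app_simps(1,3) restrict_in restrict_out subsetD)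

lemma map_eq_iff_restrict_eq: "map f xs = map g xs \<longleftrightarrow> f |` set xs = g |` set xs"
  by (metis (no_types, lifting) map_eq_conv restrict_in restrict_out ext)

lemma map_restrict_map: "set xs \<subseteq> V \<Longrightarrow> map (t |` V) xs = map t xs"
  by (auto cong: map_cong)

lemma map_map_of_zip: "distinct xs \<Longrightarrow> length xs = length ys \<Longrightarrow> map (map_of (zip xs ys)) xs = map Some ys"
  by (simp add: list_eq_iff_nth_eq map_of_zip_nth)

lemma sum_if_eq_split:
  fixes f :: "'b \<Rightarrow> 'c::comm_ring_1"
  assumes "\<forall>e\<in>S. h e = (if c e then p else q)"
  shows "(\<Sum>e\<in>S. if h e = r then f e else 0) =
    of_bool (p = r) * (\<Sum>e\<in>S. if c e then f e else 0)
    + of_bool (q = r) * ((\<Sum>e\<in>S. f e) - (\<Sum>e\<in>S. if c e then f e else 0))"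
proof -
  have "(\<Sum>e\<in>S. if h e = r then f e else 0) = (\<Sum>e\<in>S. of_bool (p = r) * (if c e then f e else 0)
      + of_bool (q = r) * (f e - (if c e then f e else 0)))"
    by (rule sum.cong[OF refl]) (use assms in auto)
  then show ?thesis by (simp add: sum.distrib sum_distrib_left sum_subtractf)
qed

section \<open>Weighted teams and marginals\<close>

lemma wteam_nonneg: "wteam A D w \<Longrightarrow> 0 \<le> w s"
  by (simp add: wteam_def)

lemma wteam_finite_support: "wteam A D w \<Longrightarrow> finite {s. w s \<noteq> 0}"
  by (simp add: wteam_def)

lemma wteam_dom: "wteam A D w \<Longrightarrow> w s \<noteq> 0 \<Longrightarrow> dom s = D"
  by (simp add: wteam_def)

lemma wteam_ran: "wteam A D w \<Longrightarrow> w s \<noteq> 0 \<Longrightarrow> ran s \<subseteq> A"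
  by (simp add: wteam_def)

lemma wteam_neq_zero_iff: "wteam A D w \<Longrightarrow> w s \<noteq> 0 \<longleftrightarrow> 0 < w s"
  using wteam_nonneg[of A D w s] by auto

lemma wteam_value:
  assumes "wteam A D w" "0 < w s" "x \<in> D"
  shows "s x \<in> Some ` A"
proof -
  have "x \<in> dom s" using wteam_dom[OF assms(1), of s] assms(2,3) by simp
  then obtain b where "s x = Some b" by blast
  then show ?thesis using wteam_ran[OF assms(1), of s] assms(2) by (auto simp: ran_def)
qed

lemma wteam_mult:
  assumes W: "wteam A D W" and c: "\<And>t. 0 < W t \<Longrightarrow> 0 \<le> c t"
  shows "wteam A D (\<lambda>t. W t * c t)"
proof -
  have "0 \<le> W t * c t" for t
    using c[of t] wteam_nonneg[OF W, of t] by (cases "0 < W t") auto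
  moreover have "finite {t. W t * c t \<noteq> 0}"
    by (rule finite_subset[OF _ wteam_finite_support[OF W]]) auto
  ultimately show ?thesis using W unfolding wteam_def by auto
qed

lemma tw_eq_sum_superset:
  assumes "finite S" "{s. w s \<noteq> 0} \<subseteq> S"
  shows "tw w P = (\<Sum>s\<in>{s\<in>S. P s}. w s)"
  unfolding tw_def by (rule sum.mono_neutral_left) (use assms in \<open>auto intro: finite_subset\<close>)

lemma tw_nonneg: "wteam A D w \<Longrightarrow> 0 \<le> tw w P"
  unfolding tw_def by (rule sum_nonneg) (simp add: wteam_nonneg)

lemma member_le_tw:
  assumes "wteam A D w" "P s"
  shows "w s \<le> tw w P"
proof (cases "w s = 0")
  case True
  then show ?thesis using tw_nonneg[OF assms(1)] by simp
next
  case False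
  have "finite {s. w s \<noteq> 0 \<and> P s}" using wteam_finite_support[OF assms(1)] by (auto intro: finite_subset)
  with False assms(2) show ?thesis unfolding tw_def
    by (intro member_le_sum) (auto simp: wteam_nonneg[OF assms(1)])
qed

lemma tw_pos_iff:
  assumes w: "wteam A D w"
  shows "0 < tw w P \<longleftrightarrow> (\<exists>s. 0 < w s \<and> P s)"
proof
  assume "0 < tw w P"
  then have "{s. w s \<noteq> 0 \<and> P s} \<noteq> {}" unfolding tw_def by force
  then show "\<exists>s. 0 < w s \<and> P s" using wteam_neq_zero_iff[OF w] by blast
next
  assume "\<exists>s. 0 < w s \<and> P s"
  then obtain s where "0 < w s" "P s" by blast
  then show "0 < tw w P" using member_le_tw[OF w, of P s] by linarith
qed

lemma tw_mono:
  assumes "wteam A D w" "\<And>s. P s \<Longrightarrow> Q s"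
  shows "tw w P \<le> tw w Q"
proof -
  have "finite {s. w s \<noteq> 0 \<and> Q s}" using wteam_finite_support[OF assms(1)] by (auto intro: finite_subset)
  then show ?thesis unfolding tw_def
    by (rule sum_mono2) (use assms wteam_nonneg[OF assms(1)] in auto)
qed

lemma tw_cong_pos:
  assumes "wteam A D w" "\<And>s. 0 < w s \<Longrightarrow> P s \<longleftrightarrow> Q s"
  shows "tw w P = tw w Q"
  unfolding tw_def using assms wteam_neq_zero_iff[OF assms(1)] by (metis (lifting))

lemma tw_restrict_eq_tw_marg:
  assumes w: "wteam A D w"
  shows "tw w (\<lambda>s. P (s |` V)) = tw (marg w V) P"
proof -
  let ?S = "{s. w s \<noteq> 0 \<and> P (s |` V)}"
  let ?R = "{r. marg w V r \<noteq> 0 \<and> P r}"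
  have finS: "finite ?S" using wteam_finite_support[OF w] by (auto intro: finite_subset)
  have "?R \<subseteq> (\<lambda>s. s |` V) ` {s. w s \<noteq> 0}"
  proof
    fix r assume "r \<in> ?R"
    then have "0 < marg w V r" using tw_nonneg[OF w] unfolding marg_def by (simp add: order_less_le)
    then obtain s where "0 < w s" "s |` V = r" unfolding marg_def using tw_pos_iff[OF w] by auto
    then show "r \<in> (\<lambda>s. s |` V) ` {s. w s \<noteq> 0}" by auto
  qed
  then have finR: "finite ?R" using wteam_finite_support[OF w] by (auto intro: finite_subset)
  have sub: "(\<lambda>s. s |` V) ` ?S \<subseteq> ?R"
  proof
    fix r assume "r \<in> (\<lambda>s. s |` V) ` ?S"
    then obtain s where s: "w s \<noteq> 0" "P (s |` V)" "r = s |` V" by auto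
    then have "0 < marg w V r" unfolding marg_def using tw_pos_iff[OF w] wteam_neq_zero_iff[OF w] by auto
    with s show "r \<in> ?R" by auto
  qed
  have "tw (marg w V) P = (\<Sum>r\<in>?R. \<Sum>s\<in>{s. w s \<noteq> 0 \<and> s |` V = r}. w s)"
    by (simp only: tw_def marg_def)
  also have "\<dots> = (\<Sum>r\<in>?R. \<Sum>s\<in>{s\<in>?S. s |` V = r}. w s)"
    by (rule sum.cong[OF refl]) (auto intro: arg_cong[where f = "sum w"])
  also have "\<dots> = sum w ?S" by (rule sum.group[OF finS finR sub])
  finally show ?thesis by (simp add: tw_def)
qed

lemma marg_pos_iff: "wteam A D w \<Longrightarrow> 0 < marg w V r \<longleftrightarrow> (\<exists>s. 0 < w s \<and> s |` V = r)"
  unfolding marg_def by (rule tw_pos_iff)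

lemma marg_dom_eq:
  assumes w: "wteam A D w"
  shows "marg w D = w"
proof
  fix t
  have "s |` D = s" if "w s \<noteq> 0" for s
    using wteam_dom[OF w that] restrict_map_eq_self[of s D] by simp
  then have "{s. w s \<noteq> 0 \<and> s |` D = t} = (if w t = 0 then {} else {t})" by auto
  then show "marg w D t = w t" by (simp add: marg_def tw_def)
qed

lemma wteam_marg:
  assumes w: "wteam A D w" and "V \<subseteq> D"
  shows "wteam A V (marg w V)"
proof -
  have ex: "\<exists>s. 0 < w s \<and> s |` V = r" if "marg w V r \<noteq> 0" for r
  proof -
    have "0 < marg w V r" using that tw_nonneg[OF w] unfolding marg_def by (simp add: order_less_le)
    then show ?thesis using marg_pos_iff[OF w] by blast
  qed
  have "{r. marg w V r \<noteq> 0} \<subseteq> (\<lambda>s. s |` V) ` {s. w s \<noteq> 0}"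
  proof
    fix r assume "r \<in> {r. marg w V r \<noteq> 0}"
    then obtain s where "0 < w s" "s |` V = r" using ex by blast
    then show "r \<in> (\<lambda>s. s |` V) ` {s. w s \<noteq> 0}" by force
  qed
  then have fin: "finite {r. marg w V r \<noteq> 0}"
    using wteam_finite_support[OF w] by (auto intro: finite_subset)
  have "dom r = V \<and> ran r \<subseteq> A" if "marg w V r \<noteq> 0" for r
  proof -
    from ex[OF that] obtain s where s: "0 < w s" "s |` V = r" by blast
    then have "dom s = D" "ran s \<subseteq> A" using wteam_dom[OF w, of s] wteam_ran[OF w, of s] by auto
    then have "dom r = D \<inter> V" using s(2)[symmetric] by simp
    then have "dom r = V" using assms(2) by blast
    moreover have "ran r \<subseteq> ran s" using s(2)[symmetric] by (auto dest!: ran_restrictD intro: ranI)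
    ultimately show ?thesis using \<open>ran s \<subseteq> A\<close> by blast
  qed
  moreover have "\<forall>r. 0 \<le> marg w V r" unfolding marg_def using tw_nonneg[OF w] by blast
  ultimately show ?thesis unfolding wteam_def using fin by blast
qed

lemma marg_marg:
  assumes "wteam A D w" "W \<subseteq> V"
  shows "marg (marg w V) W = marg w W"
proof
  fix t
  have "marg (marg w V) W t = tw w (\<lambda>s. (s |` V) |` W = t)"
    unfolding marg_def[of "marg w V"] using tw_restrict_eq_tw_marg[OF assms(1), of "\<lambda>r. r |` W = t" V]
    by simp
  also have "\<dots> = marg w W t" using assms(2) by (simp add: marg_def Int_absorb1 inf.commute)
  finally show "marg (marg w V) W t = marg w W t" .
qed

lemma marg_eq_sum_superset:
  "finite S \<Longrightarrow> {s. f s \<noteq> 0} \<subseteq> S \<Longrightarrow> marg f V r = (\<Sum>s\<in>{s\<in>S. s |` V = r}. f s)"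
  unfolding marg_def by (rule tw_eq_sum_superset)

lemma marg_mult_restrict:
  assumes w: "wteam A D w"
  shows "marg (\<lambda>t. w t * c (t |` V)) V r = c r * marg w V r"
proof -
  let ?S = "{s. w s \<noteq> 0}"
  have fin: "finite ?S" using wteam_finite_support[OF w] .
  have "marg (\<lambda>t. w t * c (t |` V)) V r = (\<Sum>s\<in>{s\<in>?S. s |` V = r}. w s * c (s |` V))"
    by (rule marg_eq_sum_superset[OF fin]) auto
  also have "\<dots> = (\<Sum>s\<in>{s\<in>?S. s |` V = r}. c r * w s)" by (rule sum.cong) auto
  also have "\<dots> = c r * marg w V r"
    by (simp add: marg_eq_sum_superset[OF fin subset_refl] sum_distrib_left)
  finally show ?thesis .
qed

section \<open>Atoms and quantifier-free formulae\<close>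

lemma sat_zero_team: "sat A D (\<lambda>_. 0) p"
proof (induction p arbitrary: D)
  case (Or p q)
  then show ?case by (auto simp: wteam_def intro!: exI[of _ "\<lambda>_. 0"])
next
  case (All x p)
  have "dup A D (\<lambda>_. 0) x = (\<lambda>_. 0)" by (auto simp: dup_def marg_def tw_def)
  then show ?case using All by simp
next
  case (Ex x p)
  then show ?case by (auto simp: wteam_def marg_def tw_def intro!: exI[of _ "\<lambda>_. 0"])
qed (auto simp: tw_def)

lemma sat_MargId_sym: "length xs = length ys \<Longrightarrow> sat A H Y (MargId xs ys) \<Longrightarrow> sat A H Y (MargId ys xs)"
  by simp

lemma sat_MargId_witness:
  assumes Y: "wteam A H Y" and "sat A H Y (MargId xs ys)" "set xs \<subseteq> H" "0 < Y t"
  obtains t' where "0 < Y t'" "map t' ys = map t xs"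
proof -
  define as where "as = map (the \<circ> t) xs"
  have vals: "t x \<in> Some ` A" if "x \<in> set xs" for x
    using wteam_value[OF Y assms(4)] that assms(3) by (simp add: subset_iff)
  then have "map Some as = map t xs" by (force simp: as_def)
  moreover have "length as = length xs \<and> set as \<subseteq> A" using vals by (force simp: as_def)
  ultimately have "tw Y (\<lambda>s. map s xs = map Some as) = tw Y (\<lambda>s. map s ys = map Some as)"
    using assms(2) unfolding sat.simps by blast
  moreover have "0 < tw Y (\<lambda>s. map s xs = map Some as)"
    using tw_pos_iff[OF Y] assms(4) \<open>map Some as = map t xs\<close> by auto
  ultimately show ?thesis using tw_pos_iff[OF Y] \<open>map Some as = map t xs\<close> that by auto
qed

fun qfree :: "'v fml \<Rightarrow> bool" where
  "qfree (Eq x y) = True"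
| "qfree (Neq x y) = True"
| "qfree (And p q) = (qfree p \<and> qfree q)"
| "qfree (Or p q) = (qfree p \<and> qfree q)"
| "qfree (All x p) = False"
| "qfree (Ex x p) = False"
| "qfree (MargId xs ys) = False"
| "qfree (Incl xs ys) = False"

text \<open>Only meaningful on quantifier-free formulae: the other constructors are sent to True.\<close>

fun fo_holds :: "('v,'a) assign \<Rightarrow> 'v fml \<Rightarrow> bool" where
  "fo_holds s (Eq x y) = (s x = s y)"
| "fo_holds s (Neq x y) = (s x \<noteq> s y)"
| "fo_holds s (And p q) = (fo_holds s p \<and> fo_holds s q)"
| "fo_holds s (Or p q) = (fo_holds s p \<or> fo_holds s q)"
| "fo_holds s (All x p) = True"
| "fo_holds s (Ex x p) = True"
| "fo_holds s (MargId xs ys) = True"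
| "fo_holds s (Incl xs ys) = True"

lemma sat_qfree_iff:
  assumes "qfree p" "wteam A D w"
  shows "sat A D w p \<longleftrightarrow> (\<forall>s. 0 < w s \<longrightarrow> fo_holds s p)"
  using assms
proof (induction p arbitrary: w)
  case (Or p q)
  show ?case
  proof
    assume "sat A D w (Or p q)"
    then obtain w1 w2 where h: "wteam A D w1" "wteam A D w2" "\<forall>s. w s = w1 s + w2 s"
      "sat A D w1 p" "sat A D w2 q" by auto
    show "\<forall>s. 0 < w s \<longrightarrow> fo_holds s (Or p q)"
    proof (intro allI impI)
      fix s assume "0 < w s"
      then have "0 < w1 s \<or> 0 < w2 s"
        using h(3) wteam_nonneg[OF h(1), of s] wteam_nonneg[OF h(2), of s] by auto
      then show "fo_holds s (Or p q)" using Or h by auto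
    qed
  next
    assume holds: "\<forall>s. 0 < w s \<longrightarrow> fo_holds s (Or p q)"
    define w1 where "w1 = (\<lambda>s. if fo_holds s p then w s else 0)"
    define w2 where "w2 = (\<lambda>s. if fo_holds s p then 0 else w s)"
    have teams: "wteam A D w1" "wteam A D w2" using Or.prems(2) unfolding wteam_def w1_def w2_def
      by (auto intro: finite_subset[of _ "{s. w s \<noteq> 0}"])
    moreover have "sat A D w1 p" using Or teams by (auto simp: w1_def)
    moreover have "sat A D w2 q" using Or teams holds by (auto simp: w2_def split: if_splits)
    moreover have "\<forall>s. w s = w1 s + w2 s" by (simp add: w1_def w2_def)
    ultimately show "sat A D w (Or p q)" by auto
  qed
qed auto

lemma qfree_fo_neg [simp]: "qfree p \<Longrightarrow> qfree (fo_neg p)"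
  by (induction p) auto

lemma fo_holds_fo_neg [simp]: "qfree p \<Longrightarrow> fo_holds s (fo_neg p) \<longleftrightarrow> \<not> fo_holds s p"
  by (induction p) auto

lemma qfree_eqs [simp]: "qfree (eqs xs ys)"
  by (induction xs ys rule: eqs.induct) auto

lemma fo_holds_eqs [simp]: "length xs = length ys \<Longrightarrow> fo_holds s (eqs xs ys) \<longleftrightarrow> map s xs = map s ys"
  by (induction xs ys rule: eqs.induct) auto

lemma qfree_iff [simp]: "qfree (iff a b) \<longleftrightarrow> qfree a \<and> qfree b"
  by (auto simp: iff_def)

lemma fo_holds_iff [simp]: "qfree a \<Longrightarrow> qfree b \<Longrightarrow> fo_holds s (iff a b) \<longleftrightarrow> (fo_holds s a \<longleftrightarrow> fo_holds s b)"
  by (auto simp: iff_def)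

lemma qfree_imp [simp]: "qfree (imp a p) \<longleftrightarrow> qfree a \<and> qfree p"
  by (auto simp: imp_def)

lemma fo_holds_imp [simp]: "qfree a \<Longrightarrow> fo_holds s (imp a p) \<longleftrightarrow> (fo_holds s a \<longrightarrow> fo_holds s p)"
  by (auto simp: imp_def)

section \<open>Universal quantifiers and uniform extensions\<close>

definition unif_ext :: "'a set \<Rightarrow> 'v set \<Rightarrow> 'v set \<Rightarrow> (('v,'a) assign \<Rightarrow> real)
    \<Rightarrow> ('v,'a) assign \<Rightarrow> real" where
  "unif_ext A D U w t = (if dom t = D \<union> U \<and> (\<forall>x\<in>U. t x \<in> Some ` A)
     then w (t |` D) / real (card A) ^ card U else 0)"

lemma wteam_unif_ext:
  assumes w: "wteam A D w" and fin: "finite D" "finite U" "finite A"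
  shows "wteam A (D \<union> U) (unif_ext A D U w)"
proof -
  have "dom t = D \<union> U \<and> ran t \<subseteq> A" if "unif_ext A D U w t \<noteq> 0" for t
  proof -
    have t: "dom t = D \<union> U" "\<forall>x\<in>U. t x \<in> Some ` A" "w (t |` D) \<noteq> 0"
      using that by (auto simp: unif_ext_def split: if_splits)
    have "ran (t |` D) \<subseteq> A" using wteam_ran[OF w] t(3) by blast
    have "b \<in> A" if "t x = Some b" for x b
    proof (cases "x \<in> D")
      case True
      then have "(t |` D) x = Some b" using that by simp
      then show ?thesis using \<open>ran (t |` D) \<subseteq> A\<close> by (auto simp: ran_def)
    next
      case False
      then have "x \<in> U" using that t(1) by auto
      then show ?thesis using t(2) that by force
    qed
    then show ?thesis using t(1) by (auto simp: ran_def)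
  qed
  moreover have "finite {t. unif_ext A D U w t \<noteq> 0}"
    by (rule finite_subset[OF _ finite_set_of_finite_maps[of "D \<union> U" A]])
      (use calculation fin in auto)
  moreover have "\<forall>t. 0 \<le> unif_ext A D U w t" unfolding unif_ext_def using wteam_nonneg[OF w] by auto
  ultimately show ?thesis unfolding wteam_def by blast
qed

lemma dup_eq_unif_ext:
  assumes w: "wteam A D w" and "x \<notin> D"
  shows "dup A D w x = unif_ext A D {x} w"
proof
  fix s
  have "D - {x} = D" using assms(2) by auto
  then show "dup A D w x s = unif_ext A D {x} w s"
    using wteam_nonneg[OF w, of "s |` D"]
    by (auto simp: dup_def unif_ext_def marg_dom_eq[OF w] insert_commute)
qed

lemma unif_ext_empty: "wteam A D w \<Longrightarrow> unif_ext A D {} w = w"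
  using wteam_dom[of A D w] by (force simp: unif_ext_def restrict_map_eq_self fun_eq_iff)

lemma unif_ext_unif_ext:
  assumes "U1 \<inter> D = {}" "U2 \<inter> (D \<union> U1) = {}" "finite U1" "finite U2"
  shows "unif_ext A (D \<union> U1) U2 (unif_ext A D U1 w) = unif_ext A D (U1 \<union> U2) w"
proof
  fix t
  have "U1 \<inter> U2 = {}" using assms(2) by blast
  then have card: "card (U1 \<union> U2) = card U1 + card U2" using assms by (simp add: card_Un_disjoint)
  show "unif_ext A (D \<union> U1) U2 (unif_ext A D U1 w) t = unif_ext A D (U1 \<union> U2) w t"
  proof (cases "dom t = D \<union> U1 \<union> U2 \<and> (\<forall>x\<in>U2. t x \<in> Some ` A)")
    case True
    then have "dom (t |` (D \<union> U1)) = D \<union> U1" by auto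
    then show ?thesis using True card by (auto simp: unif_ext_def Un_assoc power_add field_simps)
  qed (auto simp: unif_ext_def Un_assoc)
qed

lemma sat_Alls_iff:
  assumes "wteam A D w" "finite D" "finite A" "distinct u" "set u \<inter> D = {}"
  shows "sat A D w (Alls u p) \<longleftrightarrow> sat A (D \<union> set u) (unif_ext A D (set u) w) p"
  using assms
proof (induction u arbitrary: D w)
  case Nil
  then show ?case by (simp add: Alls_def unif_ext_empty)
next
  case (Cons x u)
  have team: "wteam A (D \<union> {x}) (unif_ext A D {x} w)"
    by (rule wteam_unif_ext) (use Cons.prems in auto)
  have "sat A D w (Alls (x # u) p) \<longleftrightarrow> sat A (D \<union> {x}) (unif_ext A D {x} w) (Alls u p)"
    using dup_eq_unif_ext[OF Cons.prems(1)] Cons.prems(5) by (simp add: Alls_def)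
  also have "\<dots> \<longleftrightarrow> sat A (D \<union> {x} \<union> set u) (unif_ext A (D \<union> {x}) (set u) (unif_ext A D {x} w)) p"
    by (rule Cons.IH) (use team Cons.prems in auto)
  also have "unif_ext A (D \<union> {x}) (set u) (unif_ext A D {x} w) = unif_ext A D ({x} \<union> set u) w"
    by (rule unif_ext_unif_ext) (use Cons.prems in auto)
  finally show ?case by (simp add: Un_assoc)
qed

lemma unif_ext_pos_iff:
  assumes "wteam A D w" "finite A" "A \<noteq> {}"
  shows "0 < unif_ext A D U w t \<longleftrightarrow> dom t = D \<union> U \<and> (\<forall>x\<in>U. t x \<in> Some ` A) \<and> 0 < w (t |` D)"
  using assms wteam_nonneg[OF assms(1), of "t |` D"]
  by (auto simp: unif_ext_def card_gt_0_iff zero_less_divide_iff)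

lemma unif_ext_map_add_pos:
  assumes "wteam A D w" "finite A" "A \<noteq> {}" "0 < w r" "dom g = U" "ran g \<subseteq> A" "U \<inter> D = {}"
  shows "0 < unif_ext A D U w (r ++ g)" "(r ++ g) |` D = r"
proof -
  have dr: "dom r = D" using wteam_dom[OF assms(1)] assms(4) by simp
  show rg: "(r ++ g) |` D = r" by (rule restrict_map_add_left) (use dr assms(5,7) in auto)
  have "(r ++ g) x \<in> Some ` A" if "x \<in> U" for x
    using that assms(5,6) by (auto simp: map_add_dom_app_simps(1) ran_def)
  then show "0 < unif_ext A D U w (r ++ g)"
    unfolding unif_ext_pos_iff[OF assms(1-3)] using rg dr assms(4,5) by auto
qed

lemma marg_unif_ext_singleton:
  assumes w: "wteam A D w" and "x \<notin> D" "finite A" "A \<noteq> {}"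
  shows "marg (unif_ext A D {x} w) D = w"
proof
  fix r
  let ?S = "{t. unif_ext A D {x} w t \<noteq> 0 \<and> t |` D = r}"
  show "marg (unif_ext A D {x} w) D r = w r"
  proof (cases "w r = 0")
    case True
    then have S: "?S = {}" by (auto simp: unif_ext_def split: if_splits)
    show ?thesis unfolding marg_def tw_def S using True by simp
  next
    case False
    have dr: "dom r = D" using wteam_dom[OF w] False by blast
    have cA: "card A > 0" using assms(3,4) by (simp add: card_gt_0_iff)
    have upd: "r(x \<mapsto> a) |` D = r" for a
    proof -
      have "r(x \<mapsto> a) |` D = r |` D" using assms(2) by (auto simp: restrict_map_def fun_eq_iff)
      then show ?thesis using restrict_map_eq_self[of r D] dr by simp
    qed
    have val: "unif_ext A D {x} w (r(x \<mapsto> a)) = w r / real (card A)" if "a \<in> A" for a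
      using that upd dr by (auto simp: unif_ext_def)
    have S: "?S = (\<lambda>a. r(x \<mapsto> a)) ` A"
    proof
      show "?S \<subseteq> (\<lambda>a. r(x \<mapsto> a)) ` A"
      proof
        fix t assume "t \<in> ?S"
        then have t: "dom t = D \<union> {x}" "t x \<in> Some ` A" "t |` D = r"
          by (auto simp: unif_ext_def split: if_splits)
        then obtain a where a: "a \<in> A" "t x = Some a" by auto
        have "t = t |` D ++ t |` {x}" using t(1) map_add_restrict_split[of t D "{x}"] by simp
        also have "\<dots> = r(x \<mapsto> a)" using t(3) a(2) by (simp add: restrict_map_insert)
        finally show "t \<in> (\<lambda>a. r(x \<mapsto> a)) ` A" using a(1) by blast
      qed
      show "(\<lambda>a. r(x \<mapsto> a)) ` A \<subseteq> ?S"
        using val upd False cA by auto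
    qed
    have inj: "inj_on (\<lambda>a. r(x \<mapsto> a)) A"
      by (rule inj_onI) (metis fun_upd_same option.inject)
    have "marg (unif_ext A D {x} w) D r = (\<Sum>a\<in>A. unif_ext A D {x} w (r(x \<mapsto> a)))"
      unfolding marg_def tw_def S by (simp add: sum.reindex[OF inj])
    also have "\<dots> = (\<Sum>a\<in>A. w r / real (card A))" using val by simp
    also have "\<dots> = w r" using cA by simp
    finally show ?thesis .
  qed
qed

lemma marg_unif_ext:
  assumes w: "wteam A D w" and "finite D" "finite A" "A \<noteq> {}" "finite U" "U \<inter> D = {}"
  shows "marg (unif_ext A D U w) D = w"
  using assms(5,6)
proof (induction U rule: finite_induct)
  case empty
  then show ?case using unif_ext_empty[OF w] marg_dom_eq[OF w] by simp
next
  case (insert x U)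
  have wU: "wteam A (D \<union> U) (unif_ext A D U w)"
    by (rule wteam_unif_ext[OF w]) (use assms insert in auto)
  have "unif_ext A D (insert x U) w = unif_ext A (D \<union> U) {x} (unif_ext A D U w)"
    using unif_ext_unif_ext[of U D "{x}" A w] insert by auto
  moreover have "wteam A (D \<union> U \<union> {x}) (unif_ext A (D \<union> U) {x} (unif_ext A D U w))"
    by (rule wteam_unif_ext[OF wU]) (use assms insert in auto)
  ultimately have "marg (unif_ext A D (insert x U) w) D
      = marg (marg (unif_ext A (D \<union> U) {x} (unif_ext A D U w)) (D \<union> U)) D"
    using marg_marg[of A "D \<union> U \<union> {x}" _ D "D \<union> U"] by simp
  also have "marg (unif_ext A (D \<union> U) {x} (unif_ext A D U w)) (D \<union> U) = unif_ext A D U w"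
    by (rule marg_unif_ext_singleton[OF wU]) (use insert assms in auto)
  finally show ?case using insert by simp
qed

lemma marg_unif_ext_pos_restrict:
  assumes "wteam A D' W" "marg W (D \<union> U) = unif_ext A D U w" "wteam A D w"
    "finite A" "A \<noteq> {}" "0 < W t"
  shows "0 < w (t |` D)"
proof -
  have "0 < marg W (D \<union> U) (t |` (D \<union> U))" using marg_pos_iff[OF assms(1)] assms(6) by blast
  then show ?thesis unfolding assms(2) unif_ext_pos_iff[OF assms(3-5)] by (simp add: Int_absorb2)
qed

lemma marg_unif_ext_lift:
  assumes "wteam A D' W" "marg W (D \<union> U) = unif_ext A D U w" "wteam A D w"
    "finite A" "A \<noteq> {}" "U \<inter> D = {}" "0 < w s" "dom g = U" "ran g \<subseteq> A"
  obtains t where "0 < W t" "t |` D = s" "\<forall>x\<in>U. t x = g x"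
proof -
  have sg: "0 < unif_ext A D U w (s ++ g)" "(s ++ g) |` D = s"
    by (rule unif_ext_map_add_pos; use assms in simp)+
  then obtain t where t: "0 < W t" "t |` (D \<union> U) = s ++ g"
    unfolding assms(2)[symmetric] marg_pos_iff[OF assms(1)] by blast
  have "t |` D = (t |` (D \<union> U)) |` D" by (simp add: Int_absorb1)
  then have "t |` D = s" using t(2) sg(2) by simp
  moreover have "t x = g x" if "x \<in> U" for x
  proof -
    have "t x = (s ++ g) x" using that t(2) by (metis UnI2 restrict_in)
    then show ?thesis using that assms(8) by (simp add: map_add_dom_app_simps(1))
  qed
  ultimately show ?thesis using that t(1) by blast
qed

lemma tw_unif_ext_restrict_le:
  assumes w: "wteam A D w"
  shows "tw (unif_ext A D U w) (\<lambda>t. t |` U = h) \<le> size_wt w / real (card A) ^ card U"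
proof -
  let ?S = "{t. unif_ext A D U w t \<noteq> 0 \<and> t |` U = h}"
  have t: "dom t = D \<union> U" "w (t |` D) \<noteq> 0" "unif_ext A D U w t = w (t |` D) / real (card A) ^ card U"
    if "t \<in> ?S" for t
    using that by (auto simp: unif_ext_def split: if_splits)
  have inj: "inj_on (\<lambda>t. t |` D) ?S"
  proof (rule inj_onI)
    fix t t' assume tt': "t \<in> ?S" "t' \<in> ?S" "t |` D = t' |` D"
    have "t = t |` D ++ t |` U" using t(1)[OF tt'(1)] map_add_restrict_split[of t D U] by simp
    also have "\<dots> = t' |` D ++ t' |` U" using tt' by simp
    also have "\<dots> = t'" using t(1)[OF tt'(2)] map_add_restrict_split[of t' D U] by simp
    finally show "t = t'" .
  qed
  have "(\<Sum>t\<in>?S. w (t |` D)) = (\<Sum>s\<in>(\<lambda>t. t |` D) ` ?S. w s)"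
    unfolding sum.reindex[OF inj] comp_def by (rule refl)
  also have "\<dots> \<le> (\<Sum>s\<in>{s. w s \<noteq> 0}. w s)"
  proof (rule sum_mono2[OF wteam_finite_support[OF w]])
    show "(\<lambda>t. t |` D) ` ?S \<subseteq> {s. w s \<noteq> 0}" using t(2) by blast
    show "0 \<le> w s" for s by (rule wteam_nonneg[OF w])
  qed
  also have "\<dots> = size_wt w" by (simp add: size_wt_def tw_def)
  finally have "(\<Sum>t\<in>?S. w (t |` D)) / real (card A) ^ card U \<le> size_wt w / real (card A) ^ card U"
    by (rule divide_right_mono) simp
  moreover have "tw (unif_ext A D U w) (\<lambda>t. t |` U = h) = (\<Sum>t\<in>?S. w (t |` D)) / real (card A) ^ card U"
    unfolding tw_def sum_divide_distrib by (rule sum.cong[OF refl]) (rule t(3))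
  ultimately show ?thesis by simp
qed

lemma tw_unif_ext_fiber:
  assumes w: "wteam A D w" and "U \<inter> D = {}" "dom h = U" "ran h \<subseteq> A" "finite A" "A \<noteq> {}"
  shows "tw (unif_ext A D U w) (\<lambda>r. r |` D = e \<and> r |` U = h) = w e / real (card A) ^ card U"
proof (cases "w e = 0")
  case True
  then have S: "{r. unif_ext A D U w r \<noteq> 0 \<and> r |` D = e \<and> r |` U = h} = {}"
    by (auto simp: unif_ext_def split: if_splits)
  show ?thesis unfolding tw_def S using True by simp
next
  case False
  have de: "dom e = D" using wteam_dom[OF w] False by blast
  have eh: "(e ++ h) |` D = e" "(e ++ h) |` U = h"
    using restrict_map_add_left[of e D h] restrict_map_eq_self[of h U] de assms(2,3)
    by (auto simp: restrict_map_def map_add_def fun_eq_iff split: option.split)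
  have val: "unif_ext A D U w (e ++ h) = w e / real (card A) ^ card U"
  proof -
    have "(e ++ h) x \<in> Some ` A" if "x \<in> U" for x
      using that assms(3,4) by (auto simp: map_add_dom_app_simps(1) ran_def)
    then show ?thesis using eh de assms(3) by (simp add: unif_ext_def Un_commute)
  qed
  have "{r. unif_ext A D U w r \<noteq> 0 \<and> r |` D = e \<and> r |` U = h} = {e ++ h}"
  proof
    show "{r. unif_ext A D U w r \<noteq> 0 \<and> r |` D = e \<and> r |` U = h} \<subseteq> {e ++ h}"
    proof
      fix r assume r: "r \<in> {r. unif_ext A D U w r \<noteq> 0 \<and> r |` D = e \<and> r |` U = h}"
      then have "dom r = D \<union> U" by (auto simp: unif_ext_def split: if_splits)
      then show "r \<in> {e ++ h}" using r map_add_restrict_split[of r D U] by auto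
    qed
    show "{e ++ h} \<subseteq> {r. unif_ext A D U w r \<noteq> 0 \<and> r |` D = e \<and> r |` U = h}"
      using val eh False assms(5,6) by (simp add: card_gt_0_iff)
  qed
  then show ?thesis unfolding tw_def using val by simp
qed

section \<open>Existential quantifiers and deterministic extensions\<close>

definition det_ext :: "'v set \<Rightarrow> (('v,'a) assign \<Rightarrow> ('v,'a) assign) \<Rightarrow> (('v,'a) assign \<Rightarrow> real)
    \<Rightarrow> ('v,'a) assign \<Rightarrow> real" where
  "det_ext D G w t = (if t = t |` D ++ G (t |` D) then w (t |` D) else 0)"

lemma det_ext_pos:
  "0 < det_ext D G w t \<Longrightarrow> t = t |` D ++ G (t |` D) \<and> det_ext D G w t = w (t |` D)"
  by (auto simp: det_ext_def split: if_splits)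

locale choice_function =
  fixes A :: "'a set" and D V :: "'v set" and G :: "('v,'a) assign \<Rightarrow> ('v,'a) assign"
    and w :: "('v,'a) assign \<Rightarrow> real"
  assumes team: "wteam A D w" and disjoint: "V \<inter> D = {}"
    and choice: "\<And>r. w r \<noteq> 0 \<Longrightarrow> dom (G r) = V \<and> ran (G r) \<subseteq> A"
begin

lemma restrict_map_add_choice: "w r \<noteq> 0 \<Longrightarrow> (r ++ G r) |` D = r"
  using restrict_map_add_left[of r D "G r"] wteam_dom[OF team] choice disjoint by auto

lemma det_ext_map_add: "w r \<noteq> 0 \<Longrightarrow> det_ext D G w (r ++ G r) = w r"
  using restrict_map_add_choice by (simp add: det_ext_def)

lemma wteam_det_ext: "wteam A (D \<union> V) (det_ext D G w)"
proof -
  have supp: "{t. det_ext D G w t \<noteq> 0} \<subseteq> (\<lambda>r. r ++ G r) ` {r. w r \<noteq> 0}"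
    by (auto simp: det_ext_def split: if_splits)
  have "dom t = D \<union> V \<and> ran t \<subseteq> A" if "det_ext D G w t \<noteq> 0" for t
  proof -
    have "t \<in> (\<lambda>r. r ++ G r) ` {r. w r \<noteq> 0}" using supp that by blast
    then obtain r where r: "w r \<noteq> 0" "t = r ++ G r" by blast
    have "ran (r ++ G r) \<subseteq> ran r \<union> ran (G r)"
      by (auto simp: ran_def map_add_def split: option.splits)
    moreover have "dom t = D \<union> V"
      using r(2) wteam_dom[OF team r(1)] choice[OF r(1)] by (simp add: Un_commute)
    ultimately show ?thesis using r(2) wteam_ran[OF team r(1)] choice[OF r(1)] by blast
  qed
  moreover have "finite {t. det_ext D G w t \<noteq> 0}"
    using finite_subset[OF supp] wteam_finite_support[OF team] by blast
  moreover have "\<forall>t. 0 \<le> det_ext D G w t" using wteam_nonneg[OF team] by (simp add: det_ext_def)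
  ultimately show ?thesis unfolding wteam_def by blast
qed

lemma marg_det_ext: "marg (det_ext D G w) D = w"
proof
  fix r
  show "marg (det_ext D G w) D r = w r"
  proof (cases "w r = 0")
    case True
    then have S: "{t. det_ext D G w t \<noteq> 0 \<and> t |` D = r} = {}" by (auto simp: det_ext_def)
    show ?thesis unfolding marg_def tw_def S using True by simp
  next
    case False
    have S: "{t. det_ext D G w t \<noteq> 0 \<and> t |` D = r} = {r ++ G r}"
      using restrict_map_add_choice[OF False] det_ext_map_add[OF False] False
      by (auto simp: det_ext_def split: if_splits)
    show ?thesis unfolding marg_def tw_def S using det_ext_map_add[OF False] by simp
  qed
qed

end

lemma sat_Exs_iff:
  assumes "wteam A D w" "distinct z" "set z \<inter> D = {}"
  shows "sat A D w (Exs z p) \<longleftrightarrow>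
    (\<exists>W. wteam A (D \<union> set z) W \<and> marg W D = w \<and> sat A (D \<union> set z) W p)"
  using assms
proof (induction z arbitrary: D w)
  case Nil
  then show ?case using marg_dom_eq by (fastforce simp: Exs_def)
next
  case (Cons x z)
  have D: "D - {x} = D" using Cons.prems(3) by auto
  have "sat A D w (Exs (x # z) p) \<longleftrightarrow>
      (\<exists>w1. wteam A (insert x D) w1 \<and> marg w1 D = w \<and> sat A (insert x D) w1 (Exs z p))"
    by (simp add: Exs_def D marg_dom_eq[OF Cons.prems(1)] fun_eq_iff)
  also have "\<dots> \<longleftrightarrow> (\<exists>w1. wteam A (insert x D) w1 \<and> marg w1 D = w \<and>
      (\<exists>W. wteam A (insert x D \<union> set z) W \<and> marg W (insert x D) = w1 \<and> sat A (insert x D \<union> set z) W p))"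
  proof -
    have "sat A (insert x D) w1 (Exs z p) \<longleftrightarrow> (\<exists>W. wteam A (insert x D \<union> set z) W \<and>
        marg W (insert x D) = w1 \<and> sat A (insert x D \<union> set z) W p)"
      if "wteam A (insert x D) w1" for w1
      using Cons.IH[OF that] Cons.prems by auto
    then show ?thesis by blast
  qed
  also have "\<dots> \<longleftrightarrow> (\<exists>W. wteam A (D \<union> set (x # z)) W \<and> marg W D = w \<and> sat A (D \<union> set (x # z)) W p)"
  proof
    assume "\<exists>w1. wteam A (insert x D) w1 \<and> marg w1 D = w \<and>
      (\<exists>W. wteam A (insert x D \<union> set z) W \<and> marg W (insert x D) = w1 \<and> sat A (insert x D \<union> set z) W p)"
    then obtain w1 W where "marg w1 D = w" "wteam A (insert x D \<union> set z) W"
      "marg W (insert x D) = w1" "sat A (insert x D \<union> set z) W p" by blast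
    moreover have "marg W D = marg (marg W (insert x D)) D"
      using marg_marg[OF calculation(2), of D "insert x D"] by (simp add: subset_insertI)
    ultimately show "\<exists>W. wteam A (D \<union> set (x # z)) W \<and> marg W D = w \<and> sat A (D \<union> set (x # z)) W p"
      by auto
  next
    assume "\<exists>W. wteam A (D \<union> set (x # z)) W \<and> marg W D = w \<and> sat A (D \<union> set (x # z)) W p"
    then obtain W where W: "wteam A (insert x D \<union> set z) W" "marg W D = w" "sat A (insert x D \<union> set z) W p"
      by auto
    have "wteam A (insert x D) (marg W (insert x D))" by (rule wteam_marg[OF W(1)]) auto
    moreover have "marg (marg W (insert x D)) D = w"
      using marg_marg[OF W(1), of D "insert x D"] W(2) by (simp add: subset_insertI)
    ultimately show "\<exists>w1. wteam A (insert x D) w1 \<and> marg w1 D = w \<and>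
      (\<exists>W. wteam A (insert x D \<union> set z) W \<and> marg W (insert x D) = w1 \<and> sat A (insert x D \<union> set z) W p)"
      using W by blast
  qed
  finally show ?case .
qed

section \<open>The formula psi defines mutual inclusion\<close>

locale psi_setup =
  fixes A :: "'a set" and D :: "'v set" and w :: "('v, 'a) assign \<Rightarrow> real"
    and k m :: nat and x1 x2 u z0 z :: "'v list" and v1 v2 y :: 'v
  assumes k_pos: "k > 0" and finite_A: "finite A" and A_nonempty: "A \<noteq> {}"
    and finite_D: "finite D" and team: "wteam A D w"
    and len_x1: "length x1 = m" and len_x2: "length x2 = m" and len_u: "length u = m"
    and len_z0: "length z0 = k" and len_z: "length z = k"
    and x_in_D: "set x1 \<union> set x2 \<subseteq> D"
    and distinct: "distinct (u @ [v1, v2] @ z0 @ z)"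
    and fresh: "set (u @ [v1, v2] @ z0 @ z) \<inter> D = {}"
    and y_in_u: "y \<in> set u"
begin

abbreviation "Du \<equiv> D \<union> set u"
abbreviation "Dv \<equiv> Du \<union> set [v1, v2]"
abbreviation "Dz0 \<equiv> Dv \<union> set z0"
abbreviation "Dz \<equiv> Dz0 \<union> set z"

definition psi_matrix :: "'v fml" where
  "psi_matrix = (let ys = replicate k y in
     And (iff (eqs x1 u) (Eq v1 y)) (And (iff (eqs x2 u) (Eq v2 y))
       (And (imp (eqs z0 ys) (eqs z ys)) (Or (fo_neg (eqs z ys)) (MargId (u @ [v1]) (u @ [v2]))))))"

lemma psi_eq: "psi x1 x2 u v1 v2 z0 z y = Alls u (Exs [v1, v2] (Alls z0 (Exs z psi_matrix)))"
  using len_z by (simp add: psi_def psi_matrix_def Exs_def Let_def)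

lemma sat_psi_matrix_iff:
  assumes W: "wteam A Dz W"
  shows "sat A Dz W psi_matrix \<longleftrightarrow>
    (\<forall>t. 0 < W t \<longrightarrow> (map t x1 = map t u \<longleftrightarrow> t v1 = t y) \<and> (map t x2 = map t u \<longleftrightarrow> t v2 = t y)
       \<and> (map t z0 = replicate k (t y) \<longrightarrow> map t z = replicate k (t y)))
    \<and> (\<exists>W1 W2. wteam A Dz W1 \<and> wteam A Dz W2 \<and> (\<forall>t. W t = W1 t + W2 t)
       \<and> (\<forall>t. 0 < W1 t \<longrightarrow> map t z \<noteq> replicate k (t y))
       \<and> sat A Dz W2 (MargId (u @ [v1]) (u @ [v2])))"
proof -
  have lens: "length x1 = length u" "length x2 = length u" "length z0 = length (replicate k y)"
    "length z = length (replicate k y)"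
    using len_x1 len_x2 len_u len_z0 len_z by simp_all
  have disj: "sat A Dz W' (fo_neg (eqs z (replicate k y))) \<longleftrightarrow> (\<forall>t. 0 < W' t \<longrightarrow> map t z \<noteq> replicate k (t y))"
    if "wteam A Dz W'" for W'
    using sat_qfree_iff[OF _ that] lens by (simp add: map_replicate)
  have "sat A Dz W (iff (eqs x1 u) (Eq v1 y)) \<longleftrightarrow> (\<forall>t. 0 < W t \<longrightarrow> (map t x1 = map t u \<longleftrightarrow> t v1 = t y))"
    "sat A Dz W (iff (eqs x2 u) (Eq v2 y)) \<longleftrightarrow> (\<forall>t. 0 < W t \<longrightarrow> (map t x2 = map t u \<longleftrightarrow> t v2 = t y))"
    "sat A Dz W (imp (eqs z0 (replicate k y)) (eqs z (replicate k y))) \<longleftrightarrow>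
       (\<forall>t. 0 < W t \<longrightarrow> map t z0 = replicate k (t y) \<longrightarrow> map t z = replicate k (t y))"
    by (subst sat_qfree_iff[OF _ W]; simp add: lens map_replicate)+
  then show ?thesis
    unfolding psi_matrix_def Let_def sat.simps(3,4) using disj by blast
qed

lemma sat_psi_iff:
  "sat A D w (psi x1 x2 u v1 v2 z0 z y) \<longleftrightarrow>
    (\<exists>Wv. wteam A Dv Wv \<and> marg Wv Du = unif_ext A D (set u) w \<and>
      (\<exists>Wz. wteam A Dz Wz \<and> marg Wz Dz0 = unif_ext A Dv (set z0) Wv \<and> sat A Dz Wz psi_matrix))"
proof -
  have inner: "sat A Dv Wv (Alls z0 (Exs z psi_matrix)) \<longleftrightarrow>
      (\<exists>Wz. wteam A Dz Wz \<and> marg Wz Dz0 = unif_ext A Dv (set z0) Wv \<and> sat A Dz Wz psi_matrix)"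
    (is "_ \<longleftrightarrow> ?rhs") if Wv: "wteam A Dv Wv" for Wv
  proof -
    have "sat A Dv Wv (Alls z0 (Exs z psi_matrix)) \<longleftrightarrow>
        sat A Dz0 (unif_ext A Dv (set z0) Wv) (Exs z psi_matrix)"
      by (rule sat_Alls_iff[OF Wv]) (use finite_D finite_A distinct fresh in auto)
    also have "\<dots> \<longleftrightarrow> ?rhs"
      by (rule sat_Exs_iff[OF wteam_unif_ext[OF Wv]]) (use finite_D finite_A distinct fresh in auto)
    finally show ?thesis .
  qed
  have "sat A D w (psi x1 x2 u v1 v2 z0 z y) \<longleftrightarrow>
      sat A Du (unif_ext A D (set u) w) (Exs [v1, v2] (Alls z0 (Exs z psi_matrix)))"
    unfolding psi_eq by (rule sat_Alls_iff[OF team]) (use finite_D finite_A distinct fresh in auto)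
  also have "\<dots> \<longleftrightarrow> (\<exists>Wv. wteam A Dv Wv \<and> marg Wv Du = unif_ext A D (set u) w \<and>
      sat A Dv Wv (Alls z0 (Exs z psi_matrix)))"
    by (rule sat_Exs_iff[OF wteam_unif_ext[OF team]]) (use finite_D finite_A distinct fresh in auto)
  finally show ?thesis using inner by blast
qed

lemma supp_restrict_D:
  assumes "wteam A Dv Wv" "marg Wv Du = unif_ext A D (set u) w"
    "wteam A Dz Wz" "marg Wz Dz0 = unif_ext A Dv (set z0) Wv" "0 < Wz t"
  shows "0 < w (t |` D)"
proof -
  have "0 < Wv (t |` Dv)"
    by (rule marg_unif_ext_pos_restrict[OF assms(3,4,1) finite_A A_nonempty assms(5)])
  then have "0 < w ((t |` Dv) |` D)"
    by (rule marg_unif_ext_pos_restrict[OF assms(1,2) team finite_A A_nonempty])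
  moreover have "Dv \<inter> D = D" by auto
  ultimately show ?thesis by simp
qed

lemma supp_lift_u:
  assumes "wteam A Dv Wv" "marg Wv Du = unif_ext A D (set u) w"
    "0 < w s" "length as = m" "set as \<subseteq> A"
  obtains e where "0 < Wv e" "e |` D = s" "map e u = map Some as"
proof -
  let ?g = "map_of (zip u as)"
  have g: "dom ?g = set u" "ran ?g \<subseteq> A" "map ?g u = map Some as"
    using assms(4,5) len_u distinct by (simp_all add: ran_map_of_zip map_map_of_zip)
  obtain e where "0 < Wv e" "e |` D = s" "\<forall>x\<in>set u. e x = ?g x"
    by (rule marg_unif_ext_lift[OF assms(1,2) team finite_A A_nonempty _ assms(3) g(1,2)])
      (use fresh in auto)
  then show ?thesis using that g(3) by (metis map_cong)
qed

lemma supp_lift_u_z0: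
  assumes "wteam A Dv Wv" "marg Wv Du = unif_ext A D (set u) w"
    "wteam A Dz Wz" "marg Wz Dz0 = unif_ext A Dv (set z0) Wv"
    "0 < w s" "length as = m" "set as \<subseteq> A"
  obtains t where "0 < Wz t" "t |` D = s" "map t u = map Some as" "map t z0 = replicate k (t y)"
proof -
  obtain e where e: "0 < Wv e" "e |` D = s" "map e u = map Some as"
    by (rule supp_lift_u[OF assms(1,2,5-7)])
  have "e y \<in> Some ` A" using wteam_value[OF assms(1) e(1), of y] y_in_u by simp
  then obtain b where b: "e y = Some b" "b \<in> A" by blast
  let ?h = "(\<lambda>_. Some b) |` set z0"
  have h: "dom ?h = set z0" "ran ?h \<subseteq> A" using b(2) by (auto simp: ran_def restrict_map_def split: if_splits)
  obtain t where t: "0 < Wz t" "t |` Dv = e" "\<forall>x\<in>set z0. t x = ?h x"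
    by (rule marg_unif_ext_lift[OF assms(3,4,1) finite_A A_nonempty _ e(1) h(1,2)])
      (use fresh distinct in auto)
  have sub: "D \<subseteq> Dv" "set u \<subseteq> Dv" "y \<in> Dv" by (auto simp: y_in_u)
  have "t |` D = s" using t(2) e(2) sub(1) by (metis Int_absorb1 restrict_restrict)
  moreover have "map t u = map Some as" using t(2) e(3) map_restrict_map[OF sub(2), of t] by simp
  moreover have "map t z0 = replicate k (t y)"
  proof -
    have "t y = Some b" using t(2) b(1) sub(3) by (metis restrict_in)
    then show ?thesis using t(3) len_z0 by (simp add: map_replicate_const cong: map_cong)
  qed
  ultimately show ?thesis using that t(1) by blast
qed

lemma incl_of_marg_id:
  assumes Y: "wteam A Dz Y" and mid: "sat A Dz Y (MargId (u @ [va]) (u @ [vb]))"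
    and "set xa \<subseteq> D" "set xb \<subseteq> D" "va \<in> Dz"
    and down: "\<And>t. 0 < Y t \<Longrightarrow> 0 < w (t |` D)"
    and a_eq: "\<And>t. 0 < Y t \<Longrightarrow> map t xa = map t u \<Longrightarrow> t va = t y"
    and b_eq: "\<And>t. 0 < Y t \<Longrightarrow> t vb = t y \<Longrightarrow> map t xb = map t u"
    and up: "\<And>s. 0 < w s \<Longrightarrow> \<exists>t. 0 < Y t \<and> t |` D = s \<and> map t u = map s xa"
  shows "sat A D w (Incl xa xb)"
  unfolding sat.simps
proof (intro allI impI)
  fix s assume "0 < w s"
  then obtain t where t: "0 < Y t" "t |` D = s" "map t u = map s xa" using up by blast
  have "map t xa = map s xa" using t(2) assms(3) by (auto cong: map_cong)
  then have tva: "t va = t y" using a_eq t(1,3) by simp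
  obtain t' where t': "0 < Y t'" "map t' (u @ [vb]) = map t (u @ [va])"
    by (rule sat_MargId_witness[OF Y mid _ t(1)]) (use assms(5) in auto)
  then have "t' y = t y" using y_in_u by (auto cong: map_cong simp: map_eq_conv)
  then have "map t' xb = map s xa" using b_eq[OF t'(1)] t' tva t(3) by simp
  moreover have "map (t' |` D) xb = map t' xb" using assms(4) by (auto cong: map_cong)
  ultimately show "\<exists>s'. 0 < w s' \<and> map s xa = map s' xb" using down[OF t'(1)] by metis
qed

lemma sat_psi_imp_mutual_incl:
  assumes "sat A D w (psi x1 x2 u v1 v2 z0 z y)"
  shows "sat A D w (And (Incl x1 x2) (Incl x2 x1))"
proof -
  obtain Wv Wz where Wv: "wteam A Dv Wv" "marg Wv Du = unif_ext A D (set u) w"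
    and Wz: "wteam A Dz Wz" "marg Wz Dz0 = unif_ext A Dv (set z0) Wv" "sat A Dz Wz psi_matrix"
    using assms sat_psi_iff by blast
  obtain W1 Y where matrix:
      "\<forall>t. 0 < Wz t \<longrightarrow> (map t x1 = map t u \<longleftrightarrow> t v1 = t y) \<and> (map t x2 = map t u \<longleftrightarrow> t v2 = t y)
         \<and> (map t z0 = replicate k (t y) \<longrightarrow> map t z = replicate k (t y))"
    and split: "wteam A Dz W1" "wteam A Dz Y" "\<forall>t. Wz t = W1 t + Y t"
      "\<forall>t. 0 < W1 t \<longrightarrow> map t z \<noteq> replicate k (t y)"
    and mid: "sat A Dz Y (MargId (u @ [v1]) (u @ [v2]))"
    using Wz(3) unfolding sat_psi_matrix_iff[OF Wz(1)] by blast
  have Y_Wz: "0 < Wz t" if "0 < Y t" for t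
    using that split(3) wteam_nonneg[OF split(1), of t] by simp
  have down: "0 < w (t |` D)" if "0 < Y t" for t
    by (rule supp_restrict_D[OF Wv Wz(1,2) Y_Wz[OF that]])
  have up: "\<exists>t. 0 < Y t \<and> t |` D = s \<and> map t u = map s xa" if pos: "0 < w s" and xa: "set xa \<subseteq> D" "length xa = m" for s xa
  proof -
    define as where "as = map (the \<circ> s) xa"
    have "s x \<in> Some ` A" if "x \<in> set xa" for x
      using wteam_value[OF team pos] xa(1) that by blast
    then have vals: "map Some as = map s xa" and as: "length as = m" "set as \<subseteq> A"
      using xa(2) by (force simp: as_def)+
    obtain t where t: "0 < Wz t" "t |` D = s" "map t u = map Some as" "map t z0 = replicate k (t y)"
      by (rule supp_lift_u_z0[OF Wv Wz(1,2) pos as])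
    have "\<not> 0 < W1 t" using matrix split(4) t(1,4) by blast
    then have "0 < Y t" using t(1) split(3) by (metis add.left_neutral wteam_neq_zero_iff[OF split(1)])
    then show ?thesis using t vals by auto
  qed
  have "sat A D w (Incl x1 x2)"
  proof (rule incl_of_marg_id[OF split(2) mid])
    show "set x1 \<subseteq> D" "set x2 \<subseteq> D" "v1 \<in> Dz" using x_in_D by auto
  qed (use matrix Y_Wz down up[OF _ _ len_x1] x_in_D in auto)
  moreover have "sat A D w (Incl x2 x1)"
  proof (rule incl_of_marg_id[OF split(2) sat_MargId_sym[OF _ mid]])
    show "set x1 \<subseteq> D" "set x2 \<subseteq> D" "v2 \<in> Dz" using x_in_D by auto
  qed (use matrix Y_Wz down up[OF _ _ len_x2] x_in_D in auto)
  ultimately show ?thesis by simp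
qed

lemma team_zero_if_card_le_1:
  assumes "card A \<le> 1" "tw w (\<lambda>s. map s x1 = map s x2) = 0"
  shows "w = (\<lambda>_. 0)"
proof
  fix s
  show "w s = 0"
  proof (rule ccontr)
    assume "w s \<noteq> 0"
    then have pos: "0 < w s" using wteam_neq_zero_iff[OF team, of s] by simp
    have "card A \<le> Suc 0" using assms(1) by simp
    then have single: "\<forall>b\<in>A. \<forall>c\<in>A. b = c" by (simp only: card_le_Suc0_iff_eq[OF finite_A])
    have "s (x1 ! i) = s (x2 ! i)" if "i < m" for i
    proof -
      have "x1 ! i \<in> set x1" "x2 ! i \<in> set x2" using that len_x1 len_x2 by simp_all
      then have "x1 ! i \<in> D" "x2 ! i \<in> D" using x_in_D by blast+
      then obtain b c where "s (x1 ! i) = Some b" "s (x2 ! i) = Some c" "b \<in> A" "c \<in> A"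
        using wteam_value[OF team pos] by blast
      then show ?thesis using single by simp
    qed
    then have "map s x1 = map s x2" using len_x1 len_x2 by (simp add: list_eq_iff_nth_eq)
    then have "0 < tw w (\<lambda>s. map s x1 = map s x2)" using tw_pos_iff[OF team] pos by blast
    then show False using assms(2) by simp
  qed
qed

end

section \<open>A team satisfying psi\<close>

locale psi_construction = psi_setup A D w k m x1 x2 u z0 z v1 v2 y
  for A :: "'a set" and D :: "'v set" and w k m x1 x2 u z0 z v1 v2 y +
  assumes card_A: "2 \<le> card A"
    and incl12: "sat A D w (Incl x1 x2)" and incl21: "sat A D w (Incl x2 x1)"
    and disjoint_x: "tw w (\<lambda>s. map s x1 = map s x2) = 0"
    and min_weight: "\<And>s. 0 < w s \<Longrightarrow> size_wt w / real (card A) ^ k \<le> w s"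
begin

definition other :: "'a option \<Rightarrow> 'a" where
  "other b = (SOME c. c \<in> A \<and> Some c \<noteq> b)"

lemma other: "other b \<in> A" "Some (other b) \<noteq> b"
proof -
  have "\<not> card A \<le> Suc 0" using card_A by simp
  then obtain c c' where "c \<in> A" "c' \<in> A" "c \<noteq> c'"
    using card_le_Suc0_iff_eq[OF finite_A] by blast
  then have "\<exists>c. c \<in> A \<and> Some c \<noteq> b" by (metis option.inject)
  then show "other b \<in> A" "Some (other b) \<noteq> b"
    unfolding other_def by (metis (mono_tags, lifting) someI_ex)+
qed

definition choose_v :: "('v,'a) assign \<Rightarrow> ('v,'a) assign" where
  "choose_v r = (\<lambda>x. if x = v1 then (if map r x1 = map r u then r y else Some (other (r y)))
     else if x = v2 then (if map r x2 = map r u then r y else Some (other (r y))) else None)"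

definition choose_z :: "('v,'a) assign \<Rightarrow> ('v,'a) assign" where
  "choose_z r = (\<lambda>x. if x \<in> set z
     then (if map r z0 = replicate k (r y) then r y else Some (other (r y))) else None)"

definition "Tu = unif_ext A D (set u) w"
definition "Tv = det_ext Du choose_v Tu"
definition "Tz0 = unif_ext A Dv (set z0) Tv"
definition "Tz = det_ext Dz0 choose_z Tz0"
definition "nk = real (card A) ^ k"

lemma nk_ge_2: "2 \<le> nk"
proof -
  have "(2::real) ^ 1 \<le> 2 ^ k" using k_pos by (intro power_increasing) auto
  also have "\<dots> \<le> nk" unfolding nk_def using card_A by (intro power_mono) auto
  finally show ?thesis by simp
qed

lemma card_u: "card (set u) = m"
  using distinct len_u by (simp add: distinct_card)

lemma card_z0: "card (set z0) = k"
  using distinct len_z0 by (simp add: distinct_card)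

lemma Tu_team: "wteam A Du Tu"
  unfolding Tu_def by (rule wteam_unif_ext[OF team finite_D _ finite_A]) simp

lemma Tu_pos: "0 < Tu d \<Longrightarrow> 0 < w (d |` D) \<and> Tu d = w (d |` D) / real (card A) ^ m"
  using unif_ext_pos_iff[OF team finite_A A_nonempty] card_u by (auto simp: Tu_def unif_ext_def)

lemma choice_v: "choice_function A Du (set [v1, v2]) choose_v Tu"
proof
  show "wteam A Du Tu" by (rule Tu_team)
  show "set [v1, v2] \<inter> Du = {}" using distinct fresh by auto
  fix r assume "Tu r \<noteq> 0"
  then have "r y \<in> Some ` A" using wteam_value[OF Tu_team] y_in_u wteam_neq_zero_iff[OF Tu_team] by blast
  then show "dom (choose_v r) = set [v1, v2] \<and> ran (choose_v r) \<subseteq> A"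
    using other distinct by (auto simp: choose_v_def ran_def split: if_splits)
qed

lemma Tv_team: "wteam A Dv Tv" and marg_Tv: "marg Tv Du = Tu"
  unfolding Tv_def by (rule choice_function.wteam_det_ext[OF choice_v] choice_function.marg_det_ext[OF choice_v])+

lemma Tv_pos:
  assumes "0 < Tv e"
  shows "e v1 = (if map e x1 = map e u then e y else Some (other (e y)))"
    "e v2 = (if map e x2 = map e u then e y else Some (other (e y)))"
    "0 < w (e |` D)" "Tv e = w (e |` D) / real (card A) ^ m"
proof -
  let ?d = "e |` Du"
  have d: "e = ?d ++ choose_v ?d" "Tv e = Tu ?d"
    using det_ext_pos[of Du choose_v Tu e] assms by (auto simp: Tv_def)
  then have "0 < Tu ?d" using assms by simp
  then have dy: "?d y \<in> Some ` A" using wteam_value[OF Tu_team] y_in_u by blast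
  have same: "map ?d x1 = map e x1" "map ?d x2 = map e x2" "map ?d u = map e u" "?d y = e y"
    using x_in_D y_in_u by (auto cong: map_cong)
  have "v1 \<in> dom (choose_v ?d)" "v2 \<in> dom (choose_v ?d)" using dy by (auto simp: choose_v_def)
  moreover have "choose_v ?d = choose_v e" by (simp only: choose_v_def same)
  ultimately have "e v1 = choose_v e v1" "e v2 = choose_v e v2"
    using d(1) by (metis map_add_dom_app_simps(1))+
  then show "e v1 = (if map e x1 = map e u then e y else Some (other (e y)))"
    "e v2 = (if map e x2 = map e u then e y else Some (other (e y)))"
    using distinct by (simp_all add: choose_v_def del: distinct_append) (use distinct in auto)
  have "?d |` D = e |` D" by (auto simp: Int_absorb1)
  then show "0 < w (e |` D)" "Tv e = w (e |` D) / real (card A) ^ m"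
    using Tu_pos[OF \<open>0 < Tu ?d\<close>] d(2) by auto
qed

lemma Tz0_team: "wteam A Dz0 Tz0"
  unfolding Tz0_def by (rule wteam_unif_ext[OF Tv_team]) (use finite_D finite_A in auto)

lemma marg_Tz0: "marg Tz0 Dv = Tv"
  unfolding Tz0_def by (rule marg_unif_ext[OF Tv_team]) (use finite_D finite_A A_nonempty distinct fresh in auto)

lemma Tz0_pos: "0 < Tz0 r \<Longrightarrow> 0 < Tv (r |` Dv) \<and> Tz0 r = Tv (r |` Dv) / nk"
  using unif_ext_pos_iff[OF Tv_team finite_A A_nonempty] card_z0
  by (auto simp: Tz0_def unif_ext_def nk_def)

lemma choice_z: "choice_function A Dz0 (set z) choose_z Tz0"
proof
  show "wteam A Dz0 Tz0" by (rule Tz0_team)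
  show "set z \<inter> Dz0 = {}" using distinct fresh by auto
  fix r assume "Tz0 r \<noteq> 0"
  then have "r y \<in> Some ` A" using wteam_value[OF Tz0_team] y_in_u wteam_neq_zero_iff[OF Tz0_team] by blast
  then show "dom (choose_z r) = set z \<and> ran (choose_z r) \<subseteq> A"
    using other by (auto simp: choose_z_def ran_def split: if_splits)
qed

lemma Tz_team: "wteam A Dz Tz" and marg_Tz: "marg Tz Dz0 = Tz0"
  unfolding Tz_def by (rule choice_function.wteam_det_ext[OF choice_z] choice_function.marg_det_ext[OF choice_z])+

lemma Tz_pos:
  assumes "0 < Tz t"
  shows "0 < Tz0 (t |` Dz0)" "0 < Tv (t |` Dv)"
    "map t z = replicate k (if map t z0 = replicate k (t y) then t y else Some (other (t y)))"
proof -
  let ?r = "t |` Dz0"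
  have r: "t = ?r ++ choose_z ?r" "Tz t = Tz0 ?r"
    using det_ext_pos[of Dz0 choose_z Tz0 t] assms by (auto simp: Tz_def)
  then show "0 < Tz0 ?r" using assms by simp
  moreover have "Dz0 \<inter> Dv = Dv" by auto
  ultimately show "0 < Tv (t |` Dv)" using Tz0_pos[of ?r] by simp
  have "?r y \<in> Some ` A" using wteam_value[OF Tz0_team \<open>0 < Tz0 ?r\<close>, of y] y_in_u by simp
  then have "x \<in> dom (choose_z ?r)" if "x \<in> set z" for x
    using that by (auto simp: choose_z_def)
  then have "t x = choose_z ?r x" if "x \<in> set z" for x
    using r(1) that map_add_dom_app_simps(1) by metis
  moreover have "map ?r z0 = map t z0" "?r y = t y" using y_in_u by (auto cong: map_cong)
  ultimately show "map t z = replicate k (if map t z0 = replicate k (t y) then t y else Some (other (t y)))"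
    using len_z by (simp add: choose_z_def map_replicate_const cong: map_cong)
qed

lemma Tv_lift:
  assumes "0 < w s" "0 < Tv e"
  obtains e' where "0 < Tv e'" "e' |` D = s" "map e' u = map e u"
proof -
  define as where "as = map (the \<circ> e) u"
  have "e x \<in> Some ` A" if "x \<in> set u" for x
    using wteam_value[OF Tv_team assms(2)] that by simp
  then have "map Some as = map e u" "length as = m" "set as \<subseteq> A"
    using len_u by (force simp: as_def)+
  then show ?thesis using supp_lift_u[OF Tv_team marg_Tv[unfolded Tu_def] assms(1)] that by metis
qed

definition agree :: "'v list \<Rightarrow> 'a option list \<Rightarrow> real" where
  "agree xs a = tw Tv (\<lambda>e. map e u = a \<and> map e xs = a)"

lemma agree_nonneg: "0 \<le> agree xs a"
  unfolding agree_def by (rule tw_nonneg[OF Tv_team])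

lemma tw_Tv_u_le: "tw Tv (\<lambda>e. map e u = a) \<le> size_wt w / real (card A) ^ m"
proof -
  have "tw Tv (\<lambda>e. map e u = a) = tw Tu (\<lambda>d. map d u = a)"
    using tw_restrict_eq_tw_marg[OF Tv_team, of "\<lambda>d. map d u = a" Du] marg_Tv
    by (simp cong: map_cong)
  also have "\<dots> \<le> size_wt w / real (card A) ^ m"
  proof (cases "\<exists>d. 0 < Tu d \<and> map d u = a")
    case True
    then obtain d where "map d u = a" by blast
    then have "tw Tu (\<lambda>d'. map d' u = a) = tw Tu (\<lambda>d'. d' |` set u = d |` set u)"
      by (simp add: map_eq_iff_restrict_eq[symmetric])
    also have "\<dots> \<le> size_wt w / real (card A) ^ m"
      using tw_unif_ext_restrict_le[OF team, of "set u" "d |` set u"] card_u by (simp add: Tu_def)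
    finally show ?thesis .
  next
    case False
    then have "\<not> 0 < tw Tu (\<lambda>d. map d u = a)" by (simp add: tw_pos_iff[OF Tu_team])
    then have "tw Tu (\<lambda>d. map d u = a) = 0" using tw_nonneg[OF Tu_team, of "\<lambda>d. map d u = a"] by linarith
    moreover have "0 \<le> size_wt w" unfolding size_wt_def by (rule tw_nonneg[OF team])
    ultimately show ?thesis by simp
  qed
  finally show ?thesis .
qed

lemma agree_le:
  assumes incl: "sat A D w (Incl xa xb)" and "set xa \<subseteq> D" "set xb \<subseteq> D"
  shows "agree xa a \<le> nk * agree xb a"
proof (cases "agree xa a = 0")
  case True
  then show ?thesis using agree_nonneg nk_ge_2 by simp
next
  case False
  then have "0 < agree xa a" using agree_nonneg[of xa a] by linarith
  then obtain e where e: "0 < Tv e" "map e u = a" "map e xa = a"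
    unfolding agree_def tw_pos_iff[OF Tv_team] by blast
  have "0 < w (e |` D)" using Tv_pos(3)[OF e(1)] .
  then obtain s' where s': "0 < w s'" "map (e |` D) xa = map s' xb" using incl by auto
  have "map (e |` D) xa = a" using e(3) assms(2) by (simp add: map_restrict_map)
  obtain e' where e': "0 < Tv e'" "e' |` D = s'" "map e' u = a"
    by (rule Tv_lift[OF s'(1) e(1)]) (use e(2) in simp)
  have "map e' xb = a"
    using e'(2) s'(2) \<open>map (e |` D) xa = a\<close> map_restrict_map[OF assms(3), of e'] by simp
  then have le_agree: "Tv e' \<le> agree xb a"
    unfolding agree_def using e'(3) by (intro member_le_tw[OF Tv_team]) simp
  have "size_wt w / nk / real (card A) ^ m \<le> w s' / real (card A) ^ m"
    using min_weight[OF s'(1)] by (intro divide_right_mono) (simp_all add: nk_def)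
  then have lower: "size_wt w / nk / real (card A) ^ m \<le> Tv e'"
    using Tv_pos(4)[OF e'(1)] e'(2) by simp
  have "agree xa a \<le> tw Tv (\<lambda>e. map e u = a)"
    unfolding agree_def by (rule tw_mono[OF Tv_team]) simp
  also have "\<dots> \<le> size_wt w / real (card A) ^ m" by (rule tw_Tv_u_le)
  also have "\<dots> = nk * (size_wt w / nk / real (card A) ^ m)" using nk_ge_2 by simp
  also have "\<dots> \<le> nk * agree xb a"
    using lower le_agree nk_ge_2 by (intro mult_left_mono) auto
  finally show ?thesis .
qed

text \<open>Y is the part of Tz put into the marginal-identity disjunct. It keeps everything
  where z0 = y...y, where the matrix forces z = y...y; elsewhere gamma is chosen so that the
  kept part of the extensions of e has weight theta e * Tv e (lemma marg_Y).\<close>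

definition theta :: "('v,'a) assign \<Rightarrow> real" where
  "theta e = (let a = map e u; P = agree x1 a; Q = agree x2 a in
     if map e x1 = a then min P Q / P else if map e x2 = a then min P Q / Q else 1)"

definition "gamma e = (theta e - 1 / nk) / (1 - 1 / nk)"

definition "rho r = (if map r z0 = replicate k (r y) then 1 else gamma (r |` Dv))"

definition "Y t = Tz t * rho (t |` Dz0)"

definition "L t = Tz t * (1 - rho (t |` Dz0))"

lemma min_div_bounds:
  fixes P Q c :: real
  assumes "0 < P" "0 \<le> Q" "P \<le> c * Q" "1 \<le> c"
  shows "1 / c \<le> min P Q / P" "min P Q / P \<le> 1"
proof -
  have "P / c \<le> min P Q" using assms by (auto simp: divide_le_eq mult.commute)
  then show "1 / c \<le> min P Q / P" using assms(1) by (simp add: divide_le_eq le_divide_eq mult.commute)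
  show "min P Q / P \<le> 1" using assms(1) by (simp add: divide_le_eq)
qed

lemma theta_bounds:
  assumes "0 < Tv e"
  shows "1 / nk \<le> theta e" "theta e \<le> 1"
proof -
  let ?a = "map e u"
  have x_D: "set x1 \<subseteq> D" "set x2 \<subseteq> D" using x_in_D by auto
  have "1 / nk \<le> theta e \<and> theta e \<le> 1"
  proof (cases "map e x1 = ?a")
    case True
    have "Tv e \<le> agree x1 ?a" unfolding agree_def by (rule member_le_tw[OF Tv_team]) (simp add: True)
    then show ?thesis
      using min_div_bounds[OF _ agree_nonneg agree_le[OF incl12 x_D]] assms nk_ge_2 True
      by (simp add: theta_def Let_def)
  next
    case False
    show ?thesis
    proof (cases "map e x2 = ?a")
      case True
      have "Tv e \<le> agree x2 ?a" unfolding agree_def by (rule member_le_tw[OF Tv_team]) (simp add: True)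
      then show ?thesis
        using min_div_bounds[OF _ agree_nonneg agree_le[OF incl21 x_D(2,1)]] assms nk_ge_2 True False
        by (simp add: theta_def Let_def min.commute)
    qed (use False nk_ge_2 in \<open>simp add: theta_def Let_def\<close>)
  qed
  then show "1 / nk \<le> theta e" "theta e \<le> 1" by auto
qed

lemma rho_bounds:
  assumes "0 < Tz0 r"
  shows "0 \<le> rho r" "rho r \<le> 1"
proof -
  let ?t = "theta (r |` Dv)"
  have t: "1 / nk \<le> ?t" "?t \<le> 1" using theta_bounds Tz0_pos[OF assms] by auto
  have d: "0 < 1 - 1 / nk" using nk_ge_2 by simp
  have "0 \<le> gamma (r |` Dv)" unfolding gamma_def using t d by (intro divide_nonneg_pos) auto
  moreover have "gamma (r |` Dv) \<le> 1" unfolding gamma_def using t d by (subst divide_le_eq_1_pos) auto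
  ultimately show "0 \<le> rho r" "rho r \<le> 1" by (simp_all add: rho_def)
qed

lemma Y_team: "wteam A Dz Y"
  unfolding Y_def by (rule wteam_mult[OF Tz_team]) (use rho_bounds Tz_pos(1) in blast)

lemma L_team: "wteam A Dz L"
  unfolding L_def by (rule wteam_mult[OF Tz_team]) (use rho_bounds Tz_pos(1) in force)

lemma Tz_eq_L_plus_Y: "Tz t = L t + Y t"
  by (simp add: L_def Y_def algebra_simps)

lemma L_pos: "0 < L t \<Longrightarrow> map t z \<noteq> replicate k (t y)"
proof -
  assume L: "0 < L t"
  then have "Tz t \<noteq> 0" by (auto simp: L_def)
  then have Tz: "0 < Tz t" using wteam_neq_zero_iff[OF Tz_team] by blast
  have "rho (t |` Dz0) \<noteq> 1" using L by (auto simp: L_def)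
  moreover have same: "map (t |` Dz0) z0 = map t z0" "(t |` Dz0) y = t y"
    using y_in_u by (simp_all add: map_restrict_map)
  ultimately have "map t z0 \<noteq> replicate k (t y)" by (auto simp only: rho_def same if_True simp_thms)
  then show ?thesis using Tz_pos(3)[OF Tz] other(2) k_pos by (simp add: replicate_eq_replicate)
qed

lemma Tz0_diagonal: "tw Tz0 (\<lambda>r. r |` Dv = e \<and> map r z0 = replicate k (r y)) = Tv e / nk"
proof (cases "0 < Tv e")
  case False
  then have zero: "Tv e = 0" using wteam_nonneg[OF Tv_team, of e] by simp
  have "tw Tz0 (\<lambda>r. r |` Dv = e \<and> map r z0 = replicate k (r y)) \<le> tw Tz0 (\<lambda>r. r |` Dv = e)"
    by (rule tw_mono[OF Tz0_team]) simp
  also have "\<dots> = Tv e" unfolding marg_def[symmetric] marg_Tz0 ..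
  finally show ?thesis
    using tw_nonneg[OF Tz0_team, of "\<lambda>r. r |` Dv = e \<and> map r z0 = replicate k (r y)"] zero
    by simp
next
  case True
  have "e y \<in> Some ` A" using wteam_value[OF Tv_team True, of y] y_in_u by simp
  then obtain b where b: "e y = Some b" "b \<in> A" by blast
  let ?h = "(\<lambda>_. Some b) |` set z0"
  have "tw Tz0 (\<lambda>r. r |` Dv = e \<and> map r z0 = replicate k (r y))
      = tw Tz0 (\<lambda>r. r |` Dv = e \<and> r |` set z0 = ?h)"
  proof (rule tw_cong_pos[OF Tz0_team])
    fix r assume "0 < Tz0 r"
    have "r y = e y" if "r |` Dv = e" using that y_in_u by (metis UnI1 UnI2 restrict_in)
    moreover have "map r z0 = replicate k (Some b) \<longleftrightarrow> r |` set z0 = ?h"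
      using len_z0 by (auto simp: map_eq_iff_restrict_eq[symmetric] map_replicate_const)
    ultimately show "(r |` Dv = e \<and> map r z0 = replicate k (r y)) \<longleftrightarrow> (r |` Dv = e \<and> r |` set z0 = ?h)"
      using b(1) by auto
  qed
  also have "\<dots> = Tv e / nk"
  proof -
    have h: "dom ?h = set z0" "ran ?h \<subseteq> A" using b(2) by (auto simp: ran_def restrict_map_def split: if_splits)
    have "set z0 \<inter> Dv = {}" using distinct fresh by auto
    from tw_unif_ext_fiber[OF Tv_team this h finite_A A_nonempty, of e]
    show ?thesis unfolding Tz0_def nk_def card_z0 .
  qed
  finally show ?thesis .
qed

lemma marg_Y: "marg Y Dv e = Tv e * theta e"
proof -
  let ?S = "{r. Tz0 r \<noteq> 0}"
  let ?Se = "{r\<in>?S. r |` Dv = e}"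
  let ?c = "\<lambda>r. map r z0 = replicate k (r y)"
  have fin: "finite ?S" by (rule wteam_finite_support[OF Tz0_team])
  have "marg Y Dz0 = (\<lambda>r. rho r * Tz0 r)"
    using marg_mult_restrict[OF Tz_team, of rho Dz0] marg_Tz by (simp add: Y_def[abs_def] fun_eq_iff)
  moreover have "marg Y Dv = marg (marg Y Dz0) Dv" by (rule marg_marg[OF Y_team, symmetric]) auto
  ultimately have "marg Y Dv e = marg (\<lambda>r. rho r * Tz0 r) Dv e" by simp
  also have "\<dots> = (\<Sum>r\<in>?Se. rho r * Tz0 r)" by (rule marg_eq_sum_superset[OF fin]) auto
  also have "\<dots> = (\<Sum>r\<in>?Se. gamma e * Tz0 r + (1 - gamma e) * (if ?c r then Tz0 r else 0))"
    by (rule sum.cong[OF refl]) (auto simp: rho_def algebra_simps)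
  also have "\<dots> = gamma e * (\<Sum>r\<in>?Se. Tz0 r) + (1 - gamma e) * (\<Sum>r\<in>?Se. if ?c r then Tz0 r else 0)"
    by (simp add: sum.distrib sum_distrib_left)
  also have "(\<Sum>r\<in>?Se. Tz0 r) = Tv e"
    using marg_eq_sum_superset[OF fin, of Tz0 Dv e] marg_Tz0 by simp
  also have "(\<Sum>r\<in>?Se. if ?c r then Tz0 r else 0) = tw Tz0 (\<lambda>r. r |` Dv = e \<and> ?c r)"
  proof -
    have "(\<Sum>r\<in>?Se. if ?c r then Tz0 r else 0) = (\<Sum>r\<in>{r\<in>?Se. ?c r}. Tz0 r)"
      by (rule sum.inter_filter[symmetric]) (use fin in auto)
    also have "{r\<in>?Se. ?c r} = {r\<in>?S. r |` Dv = e \<and> ?c r}" by auto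
    finally show ?thesis using tw_eq_sum_superset[OF fin, of Tz0] by simp
  qed
  also have "\<dots> = Tv e / nk" by (rule Tz0_diagonal)
  also have "gamma e * Tv e + (1 - gamma e) * (Tv e / nk) = Tv e * (gamma e * (1 - 1 / nk) + 1 / nk)"
    by (simp add: algebra_simps add_divide_distrib[symmetric])
  also have "gamma e * (1 - 1 / nk) = theta e - 1 / nk"
    unfolding gamma_def using nk_ge_2 by simp
  finally show ?thesis by simp
qed

lemma marg_Y_eq: "marg Y Dv = (\<lambda>e. Tv e * theta e)"
  by (rule ext) (rule marg_Y)

lemma Tv_x1_neq_x2: "0 < Tv e \<Longrightarrow> map e x1 \<noteq> map e x2"
proof
  assume "0 < Tv e" "map e x1 = map e x2"
  then have "0 < w (e |` D)" "map (e |` D) x1 = map (e |` D) x2"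
    using Tv_pos(3) x_in_D by (simp_all add: map_restrict_map)
  then have "0 < tw w (\<lambda>s. map s x1 = map s x2)" using tw_pos_iff[OF team] by blast
  then show False using disjoint_x by simp
qed

lemma sum_theta_slice:
  assumes "x = x1 \<or> x = x2"
  shows "(\<Sum>e\<in>{e. Tv e \<noteq> 0 \<and> map e u = a}. if map e x = a then Tv e * theta e else 0)
    = min (agree x1 a) (agree x2 a)"
proof -
  let ?S = "{e. Tv e \<noteq> 0 \<and> map e u = a}"
  let ?T = "min (agree x1 a) (agree x2 a)"
  have fin: "finite ?S" using wteam_finite_support[OF Tv_team] by (auto intro: finite_subset)
  have theta: "theta e = ?T / agree x a" if "e \<in> ?S" "map e x = a" for e
  proof -
    have "0 < Tv e" using that(1) wteam_neq_zero_iff[OF Tv_team, of e] by simp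
    then have "x = x2 \<Longrightarrow> map e x1 \<noteq> a" using Tv_x1_neq_x2[of e] that(2) by auto
    then show ?thesis using assms that by (auto simp: theta_def Let_def min.commute)
  qed
  have "(\<Sum>e\<in>?S. if map e x = a then Tv e * theta e else 0)
      = ?T / agree x a * (\<Sum>e\<in>?S. if map e x = a then Tv e else 0)"
    unfolding sum_distrib_left by (rule sum.cong[OF refl]) (auto simp: theta)
  also have "(\<Sum>e\<in>?S. if map e x = a then Tv e else 0) = agree x a"
    unfolding agree_def tw_def using sum.inter_filter[OF fin, of Tv "\<lambda>e. map e x = a"]
    by (simp add: conj_assoc)
  also have "?T / agree x a * agree x a = ?T"
    using assms agree_nonneg[of x1 a] agree_nonneg[of x2 a] by (auto simp: min_def)
  finally show ?thesis .
qed

lemma tw_Y_slice: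
  assumes "v \<in> Dv"
  shows "tw Y (\<lambda>t. map t (u @ [v]) = map Some (as @ [b]))
    = (\<Sum>e\<in>{e. Tv e \<noteq> 0 \<and> map e u = map Some as}. if e v = Some b then Tv e * theta e else 0)"
proof -
  let ?a = "map Some as"
  let ?f = "\<lambda>e. Tv e * theta e"
  have fin: "finite {e. Tv e \<noteq> 0}" by (rule wteam_finite_support[OF Tv_team])
  have uDv: "set u \<subseteq> Dv" by auto
  have "tw Y (\<lambda>t. map t (u @ [v]) = map Some (as @ [b]))
      = tw Y (\<lambda>t. map (t |` Dv) u = ?a \<and> (t |` Dv) v = Some b)"
    unfolding map_restrict_map[OF uDv] restrict_in[OF assms] by simp
  also have "\<dots> = tw ?f (\<lambda>e. map e u = ?a \<and> e v = Some b)"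
    using tw_restrict_eq_tw_marg[OF Y_team, of "\<lambda>e. map e u = ?a \<and> e v = Some b" Dv,
        unfolded marg_Y_eq] by simp
  also have "\<dots> = (\<Sum>e\<in>{e\<in>{e. Tv e \<noteq> 0}. map e u = ?a \<and> e v = Some b}. ?f e)"
    by (rule tw_eq_sum_superset[OF fin]) auto
  also have "\<dots> = (\<Sum>e\<in>{e. Tv e \<noteq> 0 \<and> map e u = ?a}. if e v = Some b then ?f e else 0)"
    using sum.inter_filter[of "{e. Tv e \<noteq> 0 \<and> map e u = ?a}" ?f "\<lambda>e. e v = Some b"] fin
    by (simp add: conj_assoc)
  finally show ?thesis .
qed

lemma sat_Y_MargId: "sat A Dz Y (MargId (u @ [v1]) (u @ [v2]))"
  unfolding sat.simps
proof (intro allI impI)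
  fix as :: "'a list" assume "length as = length (u @ [v1]) \<and> set as \<subseteq> A"
  then obtain as0 b where as0: "as = as0 @ [b]" "length as0 = m"
    using len_u by (metis length_Suc_conv_rev length_append_singleton)
  let ?a = "map Some as0"
  obtain j where j: "j < m" "u ! j = y" using y_in_u len_u by (metis in_set_conv_nth)
  let ?\<xi> = "?a ! j"
  let ?S = "{e. Tv e \<noteq> 0 \<and> map e u = ?a}"
  have vals: "\<forall>e\<in>?S. e v1 = (if map e x1 = ?a then ?\<xi> else Some (other ?\<xi>))"
      "\<forall>e\<in>?S. e v2 = (if map e x2 = ?a then ?\<xi> else Some (other ?\<xi>))"
  proof (safe)
    fix e assume e: "Tv e \<noteq> 0" "map e u = ?a"
    have "e y = ?\<xi>" using e(2) j len_u by (metis nth_map)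
    then show "e v1 = (if map e x1 = ?a then ?\<xi> else Some (other ?\<xi>))"
      "e v2 = (if map e x2 = ?a then ?\<xi> else Some (other ?\<xi>))"
      using Tv_pos(1,2)[of e] e wteam_neq_zero_iff[OF Tv_team, of e] by simp_all
  qed
  have v_Dv: "v1 \<in> Dv" "v2 \<in> Dv" by auto
  show "tw Y (\<lambda>t. map t (u @ [v1]) = map Some as) = tw Y (\<lambda>t. map t (u @ [v2]) = map Some as)"
    unfolding as0(1) tw_Y_slice[OF v_Dv(1)] tw_Y_slice[OF v_Dv(2)]
      sum_if_eq_split[OF vals(1)] sum_if_eq_split[OF vals(2)]
    using sum_theta_slice[of x1 ?a] sum_theta_slice[of x2 ?a] by simp
qed

lemma sat_psi_matrix_Tz: "sat A Dz Tz psi_matrix"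
  unfolding sat_psi_matrix_iff[OF Tz_team]
proof (intro conjI allI impI exI)
  fix t assume t: "0 < Tz t"
  let ?e = "t |` Dv"
  have e: "0 < Tv ?e" by (rule Tz_pos(2)[OF t])
  have sub: "set x1 \<subseteq> Dv" "set x2 \<subseteq> Dv" "set u \<subseteq> Dv" "y \<in> Dv" "v1 \<in> Dv" "v2 \<in> Dv"
    using x_in_D y_in_u by auto
  have same: "map ?e x1 = map t x1" "map ?e x2 = map t x2" "map ?e u = map t u" "?e y = t y"
    "?e v1 = t v1" "?e v2 = t v2"
    by (simp_all only: sub map_restrict_map restrict_in)
  show "map t x1 = map t u \<longleftrightarrow> t v1 = t y" "map t x2 = map t u \<longleftrightarrow> t v2 = t y"
    using Tv_pos(1,2)[OF e] other(2) unfolding same by auto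
  show "map t z = replicate k (t y)" if "map t z0 = replicate k (t y)"
    using Tz_pos(3)[OF t] that by simp
qed (use L_team Y_team Tz_eq_L_plus_Y L_pos sat_Y_MargId in auto)

lemma sat_psi: "sat A D w (psi x1 x2 u v1 v2 z0 z y)"
  unfolding sat_psi_iff
  using Tv_team marg_Tv Tz_team marg_Tz sat_psi_matrix_Tz by (auto simp: Tu_def Tz0_def)

end

theorem mainTheorem13:
  fixes A :: "'a set" and D :: "'v set" and w :: "('v, 'a) assign \<Rightarrow> real"
    and k m :: nat and x1 x2 u z0 z :: "'v list" and v1 v2 y :: 'v
  assumes "k > 0"
    and "finite A" and "A \<noteq> {}"
    and "finite D" and "wteam A D w"
    and "length x1 = m" and "length x2 = m" and "length u = m"
    and "length z0 = k" and "length z = k"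
    and "set x1 \<union> set x2 \<subseteq> D"
    and "distinct (u @ [v1, v2] @ z0 @ z)"
    and "set (u @ [v1, v2] @ z0 @ z) \<inter> D = {}"
    and "y \<in> set u"
  shows "(sat A D w (And (Incl x1 x2) (Incl x2 x1))
           \<and> tw w (\<lambda>s. map s x1 = map s x2) = 0
           \<and> (\<forall>s. w s > 0 \<longrightarrow> w s \<ge> size_wt w / real (card A) ^ k)
           \<longrightarrow> sat A D w (psi x1 x2 u v1 v2 z0 z y))
       \<and> (sat A D w (psi x1 x2 u v1 v2 z0 z y)
           \<longrightarrow> sat A D w (And (Incl x1 x2) (Incl x2 x1)))"
proof -
  interpret psi_setup A D w k m x1 x2 u z0 z v1 v2 y
    by unfold_locales (use assms in auto)
  have "sat A D w (psi x1 x2 u v1 v2 z0 z y)"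
    if incl: "sat A D w (And (Incl x1 x2) (Incl x2 x1))"
      and disjoint: "tw w (\<lambda>s. map s x1 = map s x2) = 0"
      and heavy: "\<forall>s. w s > 0 \<longrightarrow> w s \<ge> size_wt w / real (card A) ^ k"
  proof (cases "2 \<le> card A")
    case True
    interpret psi_construction A D w k m x1 x2 u z0 z v1 v2 y
      by unfold_locales (use True incl disjoint heavy in auto)
    show ?thesis by (rule sat_psi)
  next
    case False
    then have "w = (\<lambda>_. 0)" using team_zero_if_card_le_1 disjoint by simp
    then show ?thesis using sat_zero_team by simp
  qed
  then show ?thesis using sat_psi_imp_mutual_incl by blast
qed

end
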